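(* Let $A_{00}\subset A_{01}\subset A_{11}$ and $A_{00}\subset A_{10}\subset A_{11}$ be unital inclusions of multi-matrix algebras forming a commuting square (with respect to a faithful tracial state $\mathrm{tr}$ on $A_{11}$ and the $\mathrm{tr}$-preserving conditional expectations $E_{ij}:A_{11}\to A_{ij}$, i.e. $E_{01}E_{10}=E_{00}$). Let $A_{ij}$ have $n_{ij}$ simple summands, let $T_{ij}^{kl}$ be the inclusion matrix of $A_{ij}\subset A_{kl}$, let $v^{11}=(v^{11}_k)_{k=1}^{n_{11}}$ be the trace vector of $\mathrm{tr}$ and $v^{ij}=(v^{ij}_k)_{k=1}^{n_{ij}}$ the trace vector of the restriction of $\mathrm{tr}$ to $A_{ij}$. Then for all $1\le p<\infty$, all $a_1,\dots,a_{n_{11}}\ge0$ and all $1\le i\le n_{00}$, $$\left(\sum_{j=1}^{n_{10}}\left(\sum_{l=1}^{n_{11}} \frac{(T_{10}^{11})_{jl}\, a_lv_l^{11}}{v_j^{10}}\right)^p \frac{(T_{00}^{10})_{ij}\, v_j^{10}}{v_i^{00}}\right)^{1/p} \le \sum_{k=1}^{n_{01}}\left(\sum_{l=1}^{n_{11}} \frac{(T_{01}^{11})_{kl}\, a_l^pv_l^{11}}{v_k^{01}}\right)^{1/p}\frac{(T_{00}^{01})_{ik}\, v_k^{01}}{v_i^{00}}.$$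
   Context: A multi-matrix algebra is a finite direct sum $\bigoplus_i M_{k_i}(\mathbb{C})$. For a unital inclusion $A_0=\bigoplus_{i=1}^{n_0}M_{k_i}(\mathbb{C})\subset\bigoplus_{j=1}^{n_1}M_{l_j}(\mathbb{C})=A_1$, the inclusion matrix $T=(m_{ij})$ has $m_{ij}$ equal to the multiplicity of the summand $M_{k_i}(\mathbb{C})$ in $M_{l_j}(\mathbb{C})$. For a faithful tracial state $\mathrm{tr}$ on $A_1$, the trace vector is $(v_j)_j$ with $v_j=\mathrm{tr}(q_j)$ for $q_j$ a minimal projection in the $j$-th summand. *)

theory Defs
  imports "HOL-Analysis.Analysis"
begin

text \<open>We realise every multi-matrix algebra concretely as a unital *-subalgebra of the
full matrix algebra M_N(C), represented by the type complex^'n^'n (N = CARD('n)).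
Every finite-dimensional C*-algebra (= multi-matrix algebra) arises this way.\<close>

type_synonym 'n cmat = "complex^'n^'n"

definition adj :: "'n::finite cmat \<Rightarrow> 'n cmat" where
  "adj A = (\<chi> i j. cnj (A $ j $ i))"

definition cscale :: "complex \<Rightarrow> 'n::finite cmat \<Rightarrow> 'n cmat" where
  "cscale c A = (\<chi> i j. c * A $ i $ j)"

definition mtrace :: "'n::finite cmat \<Rightarrow> complex" where
  "mtrace A = (\<Sum>i\<in>UNIV. A $ i $ i)"

definition unital_star_subalg :: "'n::finite cmat set \<Rightarrow> bool" where
  "unital_star_subalg S \<longleftrightarrow>
     mat 1 \<in> S \<and> 0 \<in> S \<and>
     (\<forall>x\<in>S. \<forall>y\<in>S. x + y \<in> S \<and> x ** y \<in> S) \<and>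
     (\<forall>c. \<forall>x\<in>S. cscale c x \<in> S) \<and>
     (\<forall>x\<in>S. adj x \<in> S)"

definition faithful_tracial_state :: "('n::finite cmat \<Rightarrow> complex) \<Rightarrow> 'n cmat set \<Rightarrow> bool" where
  "faithful_tracial_state tr S \<longleftrightarrow>
     (\<forall>x\<in>S. \<forall>y\<in>S. tr (x + y) = tr x + tr y) \<and>
     (\<forall>c. \<forall>x\<in>S. tr (cscale c x) = c * tr x) \<and>
     tr (mat 1) = 1 \<and>
     (\<forall>x\<in>S. \<forall>y\<in>S. tr (x ** y) = tr (y ** x)) \<and>
     (\<forall>x\<in>S. Im (tr (adj x ** x)) = 0 \<and> Re (tr (adj x ** x)) \<ge> 0) \<and>
     (\<forall>x\<in>S. tr (adj x ** x) = 0 \<longrightarrow> x = 0)"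

definition tr_cond_exp ::
  "('n::finite cmat \<Rightarrow> complex) \<Rightarrow> 'n cmat set \<Rightarrow> 'n cmat set \<Rightarrow> ('n cmat \<Rightarrow> 'n cmat) \<Rightarrow> bool" where
  "tr_cond_exp tr S B E \<longleftrightarrow>
     (\<forall>x\<in>S. E x \<in> B) \<and>
     (\<forall>x\<in>S. \<forall>y\<in>S. E (x + y) = E x + E y) \<and>
     (\<forall>c. \<forall>x\<in>S. E (cscale c x) = cscale c (E x)) \<and>
     (\<forall>b\<in>B. E b = b) \<and>
     (\<forall>b1\<in>B. \<forall>b2\<in>B. \<forall>x\<in>S. E (b1 ** x ** b2) = b1 ** E x ** b2) \<and>
     (\<forall>x\<in>S. tr (E x) = tr x)"

definition is_proj :: "'n::finite cmat \<Rightarrow> bool" where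
  "is_proj p \<longleftrightarrow> p ** p = p \<and> adj p = p"

definition min_projs :: "'n::finite cmat set \<Rightarrow> 'n cmat set" where
  "min_projs S = {p. p \<in> S \<and> is_proj p \<and> p \<noteq> 0 \<and>
       (\<forall>q\<in>S. is_proj q \<and> q \<noteq> 0 \<and> q ** p = q \<longrightarrow> q = p)}"

definition central_proj :: "'n::finite cmat set \<Rightarrow> 'n cmat \<Rightarrow> bool" where
  "central_proj S p \<longleftrightarrow> p \<in> S \<and> is_proj p \<and> (\<forall>x\<in>S. p ** x = x ** p)"

text \<open>Minimal central projections of S; they index the simple summands of S.\<close>
definition summands :: "'n::finite cmat set \<Rightarrow> 'n cmat set" where
  "summands S = {z. central_proj S z \<and> z \<noteq> 0 \<and>
       (\<forall>q. central_proj S q \<and> q \<noteq> 0 \<and> q ** z = q \<longrightarrow> q = z)}"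

definition minproj_in :: "'n::finite cmat set \<Rightarrow> 'n cmat \<Rightarrow> 'n cmat" where
  "minproj_in S z = (SOME e. e \<in> min_projs S \<and> e ** z = e)"

definition trace_vec :: "('n::finite cmat \<Rightarrow> complex) \<Rightarrow> 'n cmat set \<Rightarrow> 'n cmat \<Rightarrow> real" where
  "trace_vec tr S z = Re (tr (minproj_in S z))"

text \<open>Inclusion matrix of A \<subseteq> B: entry (z,w) for summands z of A and w of B is the
multiplicity of the z-th summand of A in the w-th summand of B, i.e. the number of
minimal projections of wB into which e w splits (e a minimal projection of A under z);
measured via the matrix trace (= rank in C^N) of these projections.\<close>
definition incl_mat :: "'n::finite cmat set \<Rightarrow> 'n cmat set \<Rightarrow> 'n cmat \<Rightarrow> 'n cmat \<Rightarrow> real" where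
  "incl_mat A B z w =
     Re (mtrace (minproj_in A z ** w)) / Re (mtrace (minproj_in B w))"

end

theory Submission
  imports Defs
begin

(* Fix a summand i of A00 and a minimal projection e of A00 below it. For summands j, k, l of
   A10, A01, A11 the numbers tr(e j k l) are nonnegative, and after division by tr e they form a
   probability distribution on triples (j, k, l). All minimal projections of one summand are
   equivalent, so ratios of traces of projections below a summand are ratios of ranks; hence the
   inclusion matrices and trace vectors of the statement are marginals of this distribution, and
   the inner sums are the conditional means of a given j and of a^p given k. Conditional
   expectations of central projections are central, hence scalar on summands, and with the
   commuting square condition E01 E10 = E00 this makes the j- and k-components independent. The
   inequality is then Minkowski's inequality in L^p over j, followed by Jensen's inequality on
   each cell (j, k). *)

section \<open>A mixed norm inequality\<close>

lemma convex_on_powr_nonneg: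
  assumes "1 \<le> p"
  shows "convex_on {0..} (\<lambda>x::real. x powr p)"
proof (rule convex_on_linorderI)
  fix t x y :: real
  assume t: "0 < t" "t < 1" and x: "x \<in> {0..}" and y: "y \<in> {0..}" and xy: "x < y"
  show "((1 - t) *\<^sub>R x + t *\<^sub>R y) powr p \<le> (1 - t) * x powr p + t * y powr p"
  proof (cases "x = 0")
    case True
    have "(t * y) powr p = t powr p * y powr p"
      using t y by (simp add: powr_mult)
    also have "\<dots> \<le> t * y powr p"
      using t assms by (intro mult_right_mono powr_le_one_le) auto
    finally show ?thesis using True by simp
  next
    case False
    then have "x \<in> {0<..}" "y \<in> {0<..}" using x xy by auto
    then show ?thesis using t by (intro convex_onD[OF powr_convex[OF assms]]) auto
  qed
qed (rule convex_real_interval)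

lemma weighted_mean_powr_le:
  fixes u x :: "'l \<Rightarrow> real"
  assumes "finite L" "1 \<le> p"
    and u: "\<And>l. l \<in> L \<Longrightarrow> 0 \<le> u l" and x: "\<And>l. l \<in> L \<Longrightarrow> 0 \<le> x l"
  shows "((\<Sum>l\<in>L. u l * x l) / (\<Sum>l\<in>L. u l)) powr p \<le> (\<Sum>l\<in>L. u l * x l powr p) / (\<Sum>l\<in>L. u l)"
proof (cases "(\<Sum>l\<in>L. u l) = 0")
  case False
  define U where "U = (\<Sum>l\<in>L. u l)"
  have "U > 0" using False u by (simp add: U_def order_less_le sum_nonneg)
  have "(\<Sum>l\<in>L. (u l / U) *\<^sub>R x l) powr p \<le> (\<Sum>l\<in>L. u l / U * x l powr p)"
  proof (rule convex_on_sum[OF assms(1) _ convex_on_powr_nonneg[OF assms(2)]])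
    show "L \<noteq> {}" using False by auto
    show "(\<Sum>l\<in>L. u l / U) = 1" using \<open>U > 0\<close> by (simp add: U_def flip: sum_divide_distrib)
  qed (use u x \<open>U > 0\<close> in auto)
  then show ?thesis
    by (simp add: U_def sum_divide_distrib mult.commute flip: U_def)
qed simp

lemma minkowski_powr_degenerate:
  fixes c f g :: "'j \<Rightarrow> real"
  assumes "finite J" "1 \<le> p" and c: "\<And>j. j \<in> J \<Longrightarrow> 0 \<le> c j"
    and f: "\<And>j. j \<in> J \<Longrightarrow> 0 \<le> f j" and g: "\<And>j. j \<in> J \<Longrightarrow> 0 \<le> g j"
    and zero: "(\<Sum>j\<in>J. c j * f j powr p) = 0"
  shows "(\<Sum>j\<in>J. c j * (f j + g j) powr p) = (\<Sum>j\<in>J. c j * g j powr p)"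
proof (rule sum.cong[OF refl])
  fix j assume j: "j \<in> J"
  have "c j * f j powr p = 0"
    using sum_nonneg_eq_0_iff[of J "\<lambda>j. c j * f j powr p"] zero c f \<open>finite J\<close> j by auto
  then show "c j * (f j + g j) powr p = c j * g j powr p" by auto
qed

text \<open>The convexity proof of Minkowski's inequality: with F, G the norms of f, g, the
  point (f + g) / (F + G) is a convex combination of f / F and g / G.\<close>

lemma minkowski_powr_normalized:
  fixes c f g :: "'j \<Rightarrow> real"
  assumes p: "1 \<le> p" and c: "\<And>j. j \<in> J \<Longrightarrow> 0 \<le> c j"
    and f: "\<And>j. j \<in> J \<Longrightarrow> 0 \<le> f j" and g: "\<And>j. j \<in> J \<Longrightarrow> 0 \<le> g j"
    and FG: "0 < F" "0 < G"
    and Fp: "F powr p = (\<Sum>j\<in>J. c j * f j powr p)" and Gp: "G powr p = (\<Sum>j\<in>J. c j * g j powr p)"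
  shows "(\<Sum>j\<in>J. c j * (f j + g j) powr p) \<le> (F + G) powr p"
proof -
  define t where "t = G / (F + G)"
  have t: "0 \<le> t" "t \<le> 1" "1 - t = F / (F + G)" using FG by (auto simp: t_def field_simps)
  have pointwise: "((f j + g j) / (F + G)) powr p
      \<le> (1 - t) * (f j / F) powr p + t * (g j / G) powr p" if j: "j \<in> J" for j
  proof -
    have "(1 - t) * (f j / F) = f j / (F + G)" using FG by (simp add: t(3))
    moreover have "t * (g j / G) = g j / (F + G)" using FG by (simp add: t_def)
    ultimately have "(f j + g j) / (F + G) = (1 - t) *\<^sub>R (f j / F) + t *\<^sub>R (g j / G)"
      by (simp add: add_divide_distrib)
    also have "\<dots> powr p \<le> (1 - t) * (f j / F) powr p + t * (g j / G) powr p"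
      by (rule convex_onD[OF convex_on_powr_nonneg[OF p] t(1,2)]) (use f g FG j in auto)
    finally show ?thesis .
  qed
  have "(\<Sum>j\<in>J. c j * (f j + g j) powr p) / (F + G) powr p
      = (\<Sum>j\<in>J. c j * ((f j + g j) / (F + G)) powr p)"
    using f g FG by (simp add: sum_divide_distrib powr_divide)
  also have "\<dots> \<le> (\<Sum>j\<in>J. c j * ((1 - t) * (f j / F) powr p + t * (g j / G) powr p))"
    using pointwise c by (intro sum_mono mult_left_mono) auto
  also have "\<dots> = (\<Sum>j\<in>J. (1 - t) / F powr p * (c j * f j powr p) + t / G powr p * (c j * g j powr p))"
    using f g FG by (intro sum.cong) (auto simp: powr_divide field_simps)
  also have "\<dots> = (1 - t) / F powr p * F powr p + t / G powr p * G powr p"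
    unfolding Fp Gp by (simp add: sum.distrib sum_distrib_left)
  also have "\<dots> = 1" using FG by simp
  finally show ?thesis using FG by simp
qed

lemma minkowski_powr:
  fixes c f g :: "'j \<Rightarrow> real"
  assumes J: "finite J" and p: "1 \<le> p" and c: "\<And>j. j \<in> J \<Longrightarrow> 0 \<le> c j"
    and f: "\<And>j. j \<in> J \<Longrightarrow> 0 \<le> f j" and g: "\<And>j. j \<in> J \<Longrightarrow> 0 \<le> g j"
  shows "(\<Sum>j\<in>J. c j * (f j + g j) powr p) powr (1 / p)
    \<le> (\<Sum>j\<in>J. c j * f j powr p) powr (1 / p) + (\<Sum>j\<in>J. c j * g j powr p) powr (1 / p)"
proof -
  define F where "F = (\<Sum>j\<in>J. c j * f j powr p) powr (1 / p)"
  define G where "G = (\<Sum>j\<in>J. c j * g j powr p) powr (1 / p)"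
  have "0 \<le> (\<Sum>j\<in>J. c j * f j powr p)" "0 \<le> (\<Sum>j\<in>J. c j * g j powr p)"
    using c f g by (auto intro!: sum_nonneg)
  then have Fp: "F powr p = (\<Sum>j\<in>J. c j * f j powr p)" and Gp: "G powr p = (\<Sum>j\<in>J. c j * g j powr p)"
    using p by (simp_all add: F_def G_def powr_powr)
  consider "F = 0" | "G = 0" | "F > 0" "G > 0"
    using F_def G_def by fastforce
  then show ?thesis
  proof cases
    case 1
    then show ?thesis
      using minkowski_powr_degenerate[OF J p c f g] Fp p by (simp add: F_def G_def)
  next
    case 2
    then show ?thesis
      using minkowski_powr_degenerate[OF J p c g f] Gp p by (simp add: F_def G_def add.commute)
  next
    case 3
    then have "(\<Sum>j\<in>J. c j * (f j + g j) powr p) powr (1 / p) \<le> ((F + G) powr p) powr (1 / p)"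
      using minkowski_powr_normalized[OF p c f g 3 Fp Gp] c f g p
      by (intro powr_mono2) (auto intro!: sum_nonneg)
    then show ?thesis using 3 p by (simp add: powr_powr F_def G_def)
  qed
qed

lemma minkowski_powr_sum:
  fixes c :: "'j \<Rightarrow> real" and x :: "'j \<Rightarrow> 'k \<Rightarrow> real"
  assumes J: "finite J" and K: "finite K" and p: "1 \<le> p" and c: "\<And>j. j \<in> J \<Longrightarrow> 0 \<le> c j"
    and x: "\<And>j k. j \<in> J \<Longrightarrow> k \<in> K \<Longrightarrow> 0 \<le> x j k"
  shows "(\<Sum>j\<in>J. c j * (\<Sum>k\<in>K. x j k) powr p) powr (1 / p)
    \<le> (\<Sum>k\<in>K. (\<Sum>j\<in>J. c j * x j k powr p) powr (1 / p))"
  using K x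
proof (induction K rule: finite_induct)
  case empty
  then show ?case using p by simp
next
  case (insert k K)
  have "(\<Sum>j\<in>J. c j * (\<Sum>k'\<in>insert k K. x j k') powr p) powr (1 / p)
      = (\<Sum>j\<in>J. c j * (x j k + (\<Sum>k'\<in>K. x j k')) powr p) powr (1 / p)"
    using insert.hyps by simp
  also have "\<dots> \<le> (\<Sum>j\<in>J. c j * x j k powr p) powr (1 / p)
      + (\<Sum>j\<in>J. c j * (\<Sum>k'\<in>K. x j k') powr p) powr (1 / p)"
    using insert.prems by (intro minkowski_powr[OF J p c]) (auto intro: sum_nonneg)
  also have "\<dots> \<le> (\<Sum>j\<in>J. c j * x j k powr p) powr (1 / p)
      + (\<Sum>k'\<in>K. (\<Sum>j\<in>J. c j * x j k' powr p) powr (1 / p))"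
    using insert.IH insert.prems by simp
  finally show ?case using insert.hyps by simp
qed

text \<open>Jensen's inequality on one cell (j, k), whose mass is the product of its marginals.\<close>

lemma cell_mean_powr_le:
  fixes \<omega> a :: "'l \<Rightarrow> real"
  assumes L: "finite L" and p: "1 \<le> p" and V: "0 < V" and A: "0 \<le> A" and G: "0 \<le> G"
    and \<omega>: "\<And>l. l \<in> L \<Longrightarrow> 0 \<le> \<omega> l" and a: "\<And>l. l \<in> L \<Longrightarrow> 0 \<le> a l"
    and mass: "(\<Sum>l\<in>L. \<omega> l) * V = A * G"
  shows "A / V * ((\<Sum>l\<in>L. a l * \<omega> l) / A) powr p \<le> (G / V) powr p * ((\<Sum>l\<in>L. a l powr p * \<omega> l) / G)"
proof -
  consider "A = 0" | "G = 0" | "A > 0" "G > 0"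
    using A G by fastforce
  then show ?thesis
  proof cases
    case 1
    have "0 \<le> (G / V) powr p * ((\<Sum>l\<in>L. a l powr p * \<omega> l) / G)"
      using G \<omega> by (intro mult_nonneg_nonneg divide_nonneg_nonneg sum_nonneg) auto
    with 1 show ?thesis by simp
  next
    case 2
    then have "(\<Sum>l\<in>L. \<omega> l) = 0" using mass V by simp
    then have "\<forall>l\<in>L. \<omega> l = 0" using \<omega> L by (simp add: sum_nonneg_eq_0_iff)
    then show ?thesis using 2 by simp
  next
    case 3
    define s where "s = (\<Sum>l\<in>L. \<omega> l)"
    have s: "s = A * G / V" using mass V by (simp add: s_def field_simps)
    have "(\<Sum>l\<in>L. a l * \<omega> l) / A = G / V * ((\<Sum>l\<in>L. \<omega> l * a l) / s)"
      using 3 V by (simp add: s mult.commute)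
    then have "((\<Sum>l\<in>L. a l * \<omega> l) / A) powr p = (G / V) powr p * ((\<Sum>l\<in>L. \<omega> l * a l) / s) powr p"
      by (simp only: powr_mult)
    then have "A / V * ((\<Sum>l\<in>L. a l * \<omega> l) / A) powr p
        = A / V * (G / V) powr p * ((\<Sum>l\<in>L. \<omega> l * a l) / s) powr p"
      by simp
    also have "\<dots> \<le> A / V * (G / V) powr p * ((\<Sum>l\<in>L. \<omega> l * a l powr p) / s)"
      unfolding s_def using 3 V
      by (intro mult_left_mono weighted_mean_powr_le[OF L p]) (use \<omega> a in auto)
    also have "\<dots> = (G / V) powr p * ((\<Sum>l\<in>L. a l powr p * \<omega> l) / G)"
      using 3 V by (simp add: s mult.commute)
    finally show ?thesis .
  qed
qed

lemma conditional_mean_Lp_le: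
  fixes \<omega> :: "'j \<Rightarrow> 'k \<Rightarrow> 'l \<Rightarrow> real" and a :: "'l \<Rightarrow> real"
    and J :: "'j set" and K :: "'k set" and L :: "'l set"
  defines "A \<equiv> \<lambda>j. \<Sum>k\<in>K. \<Sum>l\<in>L. \<omega> j k l" and "G \<equiv> \<lambda>k. \<Sum>j\<in>J. \<Sum>l\<in>L. \<omega> j k l"
  assumes J: "finite J" and K: "finite K" and L: "finite L" and p: "1 \<le> p" and V: "0 < V"
    and \<omega>: "\<And>j k l. j \<in> J \<Longrightarrow> k \<in> K \<Longrightarrow> l \<in> L \<Longrightarrow> 0 \<le> \<omega> j k l"
    and a: "\<And>l. l \<in> L \<Longrightarrow> 0 \<le> a l"
    and indep: "\<And>j k. j \<in> J \<Longrightarrow> k \<in> K \<Longrightarrow> (\<Sum>l\<in>L. \<omega> j k l) * V = A j * G k"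
  shows "(\<Sum>j\<in>J. ((\<Sum>l\<in>L. a l * (\<Sum>k\<in>K. \<omega> j k l)) / A j) powr p * A j / V) powr (1 / p)
    \<le> (\<Sum>k\<in>K. ((\<Sum>l\<in>L. a l powr p * (\<Sum>j\<in>J. \<omega> j k l)) / G k) powr (1 / p) * G k / V)"
proof -
  define x where "x j k = (\<Sum>l\<in>L. a l * \<omega> j k l) / A j" for j k
  have A0: "0 \<le> A j" if "j \<in> J" for j using \<omega> that by (auto simp: A_def intro!: sum_nonneg)
  have G0: "0 \<le> G k" if "k \<in> K" for k using \<omega> that by (auto simp: G_def intro!: sum_nonneg)
  have x0: "0 \<le> x j k" if "j \<in> J" "k \<in> K" for j k
    using that a \<omega> A0 by (auto simp: x_def intro!: sum_nonneg divide_nonneg_nonneg)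
  have column: "(\<Sum>j\<in>J. A j / V * x j k powr p) powr (1 / p)
      \<le> ((\<Sum>l\<in>L. a l powr p * (\<Sum>j\<in>J. \<omega> j k l)) / G k) powr (1 / p) * G k / V"
    if k: "k \<in> K" for k
  proof -
    define W where "W = (\<Sum>l\<in>L. a l powr p * (\<Sum>j\<in>J. \<omega> j k l)) / G k"
    have W0: "0 \<le> W"
      unfolding W_def using a \<omega> k G0[OF k] by (intro divide_nonneg_nonneg sum_nonneg mult_nonneg_nonneg) auto
    have "(\<Sum>j\<in>J. A j / V * x j k powr p)
        \<le> (\<Sum>j\<in>J. (G k / V) powr p * ((\<Sum>l\<in>L. a l powr p * \<omega> j k l) / G k))"
      unfolding x_def using A0 G0[OF k] \<omega> a indep k
      by (intro sum_mono cell_mean_powr_le[OF L p V]) auto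
    also have "\<dots> = (G k / V) powr p * W"
      by (simp add: W_def sum_distrib_left sum_divide_distrib[symmetric] sum.swap[of _ J L])
    finally have "(\<Sum>j\<in>J. A j / V * x j k powr p) powr (1 / p) \<le> ((G k / V) powr p * W) powr (1 / p)"
      using A0 V x0 k p by (intro powr_mono2) (auto intro!: sum_nonneg)
    also have "\<dots> = W powr (1 / p) * G k / V"
      using W0 G0[OF k] V p by (simp add: powr_mult powr_powr)
    finally show ?thesis unfolding W_def .
  qed
  have "(\<Sum>l\<in>L. a l * (\<Sum>k\<in>K. \<omega> j k l)) / A j = (\<Sum>k\<in>K. x j k)" for j
    by (simp add: x_def sum_distrib_left sum.swap[of _ K L] flip: sum_divide_distrib)
  then have "(\<Sum>j\<in>J. ((\<Sum>l\<in>L. a l * (\<Sum>k\<in>K. \<omega> j k l)) / A j) powr p * A j / V)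
      = (\<Sum>j\<in>J. A j / V * (\<Sum>k\<in>K. x j k) powr p)"
    by (simp add: mult.commute)
  then have "(\<Sum>j\<in>J. ((\<Sum>l\<in>L. a l * (\<Sum>k\<in>K. \<omega> j k l)) / A j) powr p * A j / V) powr (1 / p)
      \<le> (\<Sum>k\<in>K. (\<Sum>j\<in>J. A j / V * x j k powr p) powr (1 / p))"
    using minkowski_powr_sum[OF J K p, of "\<lambda>j. A j / V" x] A0 V x0 by simp
  also have "\<dots> \<le> (\<Sum>k\<in>K. ((\<Sum>l\<in>L. a l powr p * (\<Sum>j\<in>J. \<omega> j k l)) / G k) powr (1 / p) * G k / V)"
    using column by (rule sum_mono)
  finally show ?thesis .
qed

lemma adj_nth [simp]: "adj A $ i $ j = cnj (A $ j $ i)"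
  by (simp add: adj_def)

lemma cscale_nth [simp]: "cscale c A $ i $ j = c * A $ i $ j"
  by (simp add: cscale_def)

lemma matrix_mult_nth: "(A ** B) $ i $ j = (\<Sum>k\<in>UNIV. A $ i $ k * B $ k $ j)"
  by (simp add: matrix_matrix_mult_def)

lemma adj_adj [simp]: "adj (adj A) = A"
  by (simp add: vec_eq_iff)

lemma adj_matrix_mult: "adj (A ** B) = adj B ** adj A"
  by (simp add: vec_eq_iff matrix_mult_nth mult.commute)

lemma adj_add [simp]: "adj (A + B) = adj A + adj B"
  by (simp add: vec_eq_iff)

lemma adj_diff [simp]: "adj (A - B) = adj A - adj B"
  by (simp add: vec_eq_iff)

lemma adj_uminus [simp]: "adj (- A) = - adj A"
  by (simp add: vec_eq_iff)

lemma adj_zero [simp]: "adj 0 = 0"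
  by (simp add: vec_eq_iff)

lemma adj_mat_1 [simp]: "adj (mat 1) = mat 1"
  by (simp add: vec_eq_iff mat_def)

lemma adj_cscale [simp]: "adj (cscale c A) = cscale (cnj c) (adj A)"
  by (simp add: vec_eq_iff)

lemma adj_eq_0_iff [simp]: "adj A = 0 \<longleftrightarrow> A = 0"
  by (metis adj_adj adj_zero)

lemma adj_sum: "adj (sum F I) = (\<Sum>i\<in>I. adj (F i))"
  by (induction I rule: infinite_finite_induct) auto

lemma cscale_matrix_mult_left [simp]: "cscale c A ** B = cscale c (A ** B)"
  by (simp add: vec_eq_iff matrix_mult_nth sum_distrib_left mult.assoc)

lemma cscale_matrix_mult_right [simp]: "A ** cscale c B = cscale c (A ** B)"
  by (simp add: vec_eq_iff matrix_mult_nth sum_distrib_left mult_ac)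

lemma cscale_cscale [simp]: "cscale c (cscale d A) = cscale (c * d) A"
  by (simp add: vec_eq_iff mult.assoc)

lemma cscale_eq_0_iff [simp]: "cscale c A = 0 \<longleftrightarrow> c = 0 \<or> A = 0"
  by (auto simp: vec_eq_iff)

lemma cscale_add_left: "cscale (c + d) A = cscale c A + cscale d A"
  by (simp add: vec_eq_iff algebra_simps)

lemma cscale_diff_left: "cscale (c - d) A = cscale c A - cscale d A"
  by (simp add: vec_eq_iff algebra_simps)

lemma cscale_of_real: "cscale (complex_of_real r) A = r *\<^sub>R A"
  by (simp add: vec_eq_iff) (simp add: scaleR_conv_of_real)

lemma scaleR_matrix_mult_left: "(c *\<^sub>R A) ** B = c *\<^sub>R ((A :: 'n::finite cmat) ** B)"
  by (simp add: vec_eq_iff matrix_mult_nth scaleR_sum_right)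

lemma scaleR_matrix_mult_right: "A ** (c *\<^sub>R B) = c *\<^sub>R ((A :: 'n::finite cmat) ** B)"
  by (simp add: vec_eq_iff matrix_mult_nth scaleR_sum_right)

lemma matrix_add_rdistrib: "(A + B) ** C = A ** C + B ** (C :: 'n::finite cmat)"
  by (simp add: vec_eq_iff matrix_mult_nth algebra_simps sum.distrib)

lemma matrix_diff_ldistrib: "A ** (B - C) = A ** B - A ** (C :: 'n::finite cmat)"
  by (simp add: vec_eq_iff matrix_mult_nth algebra_simps sum_subtractf)

lemma matrix_diff_rdistrib: "(A - B) ** C = A ** C - B ** (C :: 'n::finite cmat)"
  by (simp add: vec_eq_iff matrix_mult_nth algebra_simps sum_subtractf)

lemma matrix_sum_rdistrib: "sum F I ** (C :: 'n::finite cmat) = (\<Sum>i\<in>I. F i ** C)"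
  by (induction I rule: infinite_finite_induct) (auto simp: matrix_add_rdistrib)

lemma matrix_sum_ldistrib: "(C :: 'n::finite cmat) ** sum F I = (\<Sum>i\<in>I. C ** F i)"
  by (induction I rule: infinite_finite_induct) (auto simp: matrix_add_ldistrib)

lemma matrix_vector_mult_uminus_left: "(- A) *v x = - (A *v (x :: complex^'n::finite))"
  by (simp add: vec_eq_iff matrix_vector_mult_def sum_negf)

lemma cmatrix_vector_mult_scaleR: "(A :: 'n::finite cmat) *v (c *\<^sub>R x) = c *\<^sub>R (A *v x)"
  by (rule linear_scale[OF matrix_vector_mul_linear])

lemma scaleR_matrix_vector_mult: "(c *\<^sub>R A) *v x = c *\<^sub>R ((A :: 'n::finite cmat) *v x)"
  by (simp add: vec_eq_iff matrix_vector_mult_def scaleR_sum_right)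

lemma mtrace_cscale: "mtrace (cscale c A) = c * mtrace A"
  by (simp add: mtrace_def sum_distrib_left)

lemma mtrace_add: "mtrace (A + B) = mtrace A + mtrace B"
  by (simp add: mtrace_def sum.distrib)

lemma mtrace_commute: "mtrace (A ** B) = mtrace (B ** A)"
  unfolding mtrace_def matrix_mult_nth by (subst sum.swap) (simp add: mult.commute)

lemma mtrace_adj_mult_self: "mtrace (adj A ** A) = complex_of_real (\<Sum>i\<in>UNIV. \<Sum>k\<in>UNIV. (cmod (A $ k $ i))\<^sup>2)"
  unfolding mtrace_def matrix_mult_nth by (simp add: mult.commute complex_mult_cnj cmod_def)

lemma mtrace_adj_mult_self_pos:
  assumes "A \<noteq> 0"
  shows "0 < Re (mtrace (adj A ** A))"
proof -
  obtain i k where "A $ k $ i \<noteq> 0"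
    using assms by (auto simp: vec_eq_iff)
  then have "0 < (\<Sum>i\<in>UNIV. \<Sum>k\<in>UNIV. (cmod (A $ k $ i))\<^sup>2)"
    by (intro sum_pos2[of _ i] sum_pos2[of _ k]) (auto intro: sum_nonneg)
  then show ?thesis by (simp add: mtrace_adj_mult_self)
qed

lemma adj_mult_self_eq_0: "adj A ** A = 0 \<Longrightarrow> A = 0"
  using mtrace_adj_mult_self_pos[of A] by (auto simp: mtrace_def)

lemma mult_adj_self_eq_0: "A ** adj A = 0 \<Longrightarrow> A = 0"
  using adj_mult_self_eq_0[of "adj A"] by simp

lemma proj_mult_idem: "is_proj p \<Longrightarrow> A ** p ** p = A ** p"
  by (simp add: is_proj_def flip: matrix_mul_assoc)

lemma proj_below_sym:
  assumes "is_proj p" "is_proj q" "q ** p = q"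
  shows "p ** q = q"
proof -
  have "p ** q = adj (q ** p)" using assms(1,2) by (simp add: adj_matrix_mult is_proj_def)
  then show ?thesis using assms(2,3) by (simp add: is_proj_def)
qed

lemma is_proj_mult:
  assumes "is_proj p" "is_proj q" "p ** q = q ** p"
  shows "is_proj (p ** q)"
proof -
  have "p ** q ** (p ** q) = p ** (q ** p) ** q" by (simp add: matrix_mul_assoc)
  also have "\<dots> = p ** q"
    using assms by (simp add: is_proj_def matrix_mul_assoc proj_mult_idem flip: assms(3))
  finally show ?thesis using assms by (simp add: is_proj_def adj_matrix_mult)
qed


lemma is_proj_complement: "is_proj q \<Longrightarrow> is_proj (mat 1 - q)"
  by (simp add: is_proj_def matrix_diff_ldistrib matrix_diff_rdistrib)

section \<open>Hermitian matrices\<close>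

lemma hermitian_inner:
  fixes w :: "'n::finite cmat"
  assumes "adj w = w"
  shows "inner (w *v x) y = inner x (w *v y)"
proof -
  have w: "w $ j $ i = cnj (w $ i $ j)" for i j
    using arg_cong[OF assms, of "\<lambda>A. A $ j $ i"] by simp
  have entry: "inner (w $ a $ b * x $ b) (y $ a) = inner (x $ b) (w $ b $ a * y $ a)" for a b
    by (simp add: inner_complex_def w[of b a] algebra_simps)
  have "inner (w *v x) y = (\<Sum>a\<in>UNIV. \<Sum>b\<in>UNIV. inner (w $ a $ b * x $ b) (y $ a))"
    unfolding inner_vec_def matrix_vector_mult_def by (simp only: vec_lambda_beta inner_sum_left)
  also have "\<dots> = (\<Sum>b\<in>UNIV. \<Sum>a\<in>UNIV. inner (x $ b) (w $ b $ a * y $ a))"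
    unfolding entry by (rule sum.swap)
  also have "\<dots> = inner x (w *v y)"
    unfolding inner_vec_def matrix_vector_mult_def by (simp only: vec_lambda_beta inner_sum_right)
  finally show ?thesis .
qed

lemma quadratic_nonneg_imp_linear_coeff_zero:
  fixes b c :: real
  assumes c: "0 \<le> c" and nonneg: "\<And>s. 0 \<le> 2 * s * b + s\<^sup>2 * c"
  shows "b = 0"
proof -
  define s where "s = - b / (c + 1)"
  have sc: "s * (c + 1) = - b" using c by (simp add: s_def)
  have "0 \<le> (2 * s * b + s\<^sup>2 * c) * (c + 1)\<^sup>2" using nonneg by simp
  also have "\<dots> = 2 * (s * (c + 1)) * b * (c + 1) + (s * (c + 1))\<^sup>2 * c"
    by (simp add: power2_eq_square algebra_simps)
  also have "\<dots> = - (b\<^sup>2 * (c + 2))"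
    unfolding sc by (simp add: power2_eq_square algebra_simps)
  finally have "b\<^sup>2 * (c + 2) \<le> 0" by simp
  then have "b\<^sup>2 \<le> 0" using c by (simp add: mult_le_0_iff)
  then show ?thesis by simp
qed

lemma psd_kernel:
  fixes B :: "'a::real_inner \<Rightarrow> 'a"
  assumes lin: "linear B" and sym: "\<And>x y. inner (B x) y = inner x (B y)"
    and psd: "\<And>x. 0 \<le> inner (B x) x" and v: "inner (B v) v = 0"
  shows "B v = 0"
proof -
  define b where "b = B v"
  have "0 \<le> 2 * s * inner b b + s\<^sup>2 * inner (B b) b" for s
  proof -
    have "0 \<le> inner (B (v + s *\<^sub>R b)) (v + s *\<^sub>R b)" by (rule psd)
    also have "\<dots> = inner (B v) v + s * inner b b + s * inner (B b) v + s\<^sup>2 * inner (B b) b"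
      by (simp add: linear_add[OF lin] linear_scale[OF lin] power2_eq_square algebra_simps b_def)
    also have "inner (B b) v = inner b b" by (simp add: sym b_def inner_commute)
    finally show ?thesis using v by simp
  qed
  then have "inner b b = 0" by (rule quadratic_nonneg_imp_linear_coeff_zero[OF psd])
  then show ?thesis by (simp add: b_def)
qed

lemma hermitian_max_eigen:
  fixes w :: "'n::finite cmat"
  assumes h: "adj w = w"
  shows "\<exists>v l. norm v = 1 \<and> w *v v = l *\<^sub>R v \<and> (\<forall>u. inner (w *v u) u \<le> l * (norm u)\<^sup>2)"
proof -
  let ?Q = "\<lambda>v. inner (w *v v) v"
  have "continuous_on (sphere 0 1) ?Q"
    by (intro continuous_intros linear_continuous_on) (simp add: linear_conv_bounded_linear[symmetric])
  moreover obtain v0 :: "complex^'n" where "norm v0 = 1"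
    using vector_choose_size[of 1] by auto
  then have "sphere (0::complex^'n) 1 \<noteq> {}" by (auto simp: dist_norm)
  ultimately obtain v where v: "v \<in> sphere 0 1" and vmax: "\<And>u. u \<in> sphere 0 1 \<Longrightarrow> ?Q u \<le> ?Q v"
    using continuous_attains_sup[OF compact_sphere] by blast
  define l where "l = ?Q v"
  have nv: "norm v = 1" using v by (simp add: dist_norm)
  have le: "?Q u \<le> l * (norm u)\<^sup>2" for u
  proof (cases "u = 0")
    case False
    then have "?Q (u /\<^sub>R norm u) \<le> l" unfolding l_def by (intro vmax) (simp add: dist_norm)
    moreover have "?Q (u /\<^sub>R norm u) = ?Q u / (norm u)\<^sup>2"
      by (simp add: cmatrix_vector_mult_scaleR power2_eq_square divide_inverse mult_ac)
    ultimately show ?thesis using False by (simp add: divide_le_eq)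
  qed simp
  define B where "B x = l *\<^sub>R x - w *v x" for x
  have "B v = 0"
  proof (rule psd_kernel[of B])
    show "linear B"
      by (rule linearI) (simp_all add: B_def cmatrix_vector_mult_scaleR algebra_simps)
    show "inner (B x) y = inner x (B y)" for x y
      unfolding B_def using hermitian_inner[OF h] by (simp add: inner_diff_left inner_diff_right inner_commute)
    show "0 \<le> inner (B x) x" for x
      using le[of x] by (simp add: B_def inner_diff_left power2_norm_eq_inner)
    show "inner (B v) v = 0"
      using nv by (simp add: B_def inner_diff_left l_def power2_norm_eq_inner[symmetric])
  qed
  then show ?thesis using nv le by (intro exI[of _ v] exI[of _ l]) (simp add: B_def)
qed

lemma hermitian_eigen:
  fixes w :: "'n::finite cmat"
  assumes h: "adj w = w" and nz: "w \<noteq> 0"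
  shows "\<exists>v l. v \<noteq> 0 \<and> l \<noteq> 0 \<and> w *v v = l *\<^sub>R v"
proof (rule ccontr)
  assume no: "\<not> ?thesis"
  obtain v l where v: "norm v = 1" "w *v v = l *\<^sub>R v"
    and lmax: "\<And>u. inner (w *v u) u \<le> l * (norm u)\<^sup>2"
    using hermitian_max_eigen[OF h] by blast
  obtain v' l' where v': "norm v' = 1" "(- w) *v v' = l' *\<^sub>R v'"
    and lmax': "\<And>u. inner ((- w) *v u) u \<le> l' * (norm u)\<^sup>2"
    using hermitian_max_eigen[of "- w"] h by auto
  have "w *v v' = (- l') *\<^sub>R v'"
    using v'(2) by (metis matrix_vector_mult_uminus_left minus_minus scaleR_minus_left)
  moreover have "v \<noteq> 0" "v' \<noteq> 0" using v(1) v'(1) by auto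
  ultimately have "l = 0" "- l' = 0" using no v(2) by blast+
  then have Q: "inner (w *v u) u = 0" for u
    using lmax[of u] lmax'[of u] by (simp add: matrix_vector_mult_uminus_left)
  have "w *v u = 0" for u
    by (rule psd_kernel[of "\<lambda>u. w *v u", OF _ hermitian_inner[OF h]]) (auto simp: Q)
  then show False using nz by (metis matrix_eq matrix_vector_mult_0)
qed

section \<open>Spectral projections\<close>

definition subalg :: "'n::finite cmat set \<Rightarrow> bool" where
  "subalg X \<longleftrightarrow> (\<forall>x\<in>X. \<forall>y\<in>X. x + y \<in> X \<and> x ** y \<in> X) \<and> (\<forall>c. \<forall>x\<in>X. cscale c x \<in> X)"

lemma subalgI:
  assumes "\<And>x y. x \<in> X \<Longrightarrow> y \<in> X \<Longrightarrow> x + y \<in> X" "\<And>x y. x \<in> X \<Longrightarrow> y \<in> X \<Longrightarrow> x ** y \<in> X"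
    and "\<And>c x. x \<in> X \<Longrightarrow> cscale c x \<in> X"
  shows "subalg X"
  using assms by (auto simp: subalg_def)

lemma subalgD:
  assumes "subalg X" "x \<in> X" "y \<in> X"
  shows "x + y \<in> X" "x ** y \<in> X" "cscale c x \<in> X" "x - y \<in> X"
proof -
  show "x + y \<in> X" "x ** y \<in> X" "cscale c x \<in> X" using assms by (auto simp: subalg_def)
  have "x + cscale (-1) y \<in> X" using assms by (auto simp: subalg_def)
  moreover have "x + cscale (-1) y = x - y" by (simp add: vec_eq_iff)
  ultimately show "x - y \<in> X" by simp
qed

lemma subalg_hull: "subalg (subalg hull X)"
  by (rule hull_in) (auto simp: subalg_def)

lemma subalg_hull_commute:
  assumes "w \<in> subalg hull {t}"
  shows "w ** t = t ** w"
proof (rule hull_induct[OF assms])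
  show "subalg {w. w ** t = t ** w}"
    by (rule subalgI) (simp_all add: matrix_add_ldistrib matrix_add_rdistrib, metis matrix_mul_assoc)
qed simp

definition range_dim :: "'n::finite cmat \<Rightarrow> nat" where
  "range_dim A = dim (range ((*v) A))"

lemma range_dim_less:
  fixes A B :: "'n::finite cmat"
  assumes "range ((*v) A) \<subseteq> range ((*v) B)" "v \<in> range ((*v) B)" "v \<notin> range ((*v) A)"
  shows "range_dim A < range_dim B"
proof -
  have span: "span (range ((*v) M)) = range ((*v) M)" for M :: "'n::finite cmat"
    by (rule span_eq_iff[THEN iffD2, OF linear_subspace_image[OF matrix_vector_mul_linear subspace_UNIV]])
  have "span (range ((*v) A)) \<subset> span (range ((*v) B))" unfolding span using assms by blast
  then show ?thesis unfolding range_dim_def by (rule dim_psubset)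
qed

lemma hermitian_range_dim_less:
  fixes u w :: "'n::finite cmat"
  assumes h: "adj u = u" and sub: "range ((*v) u) \<subseteq> range ((*v) w)"
    and v: "v \<in> range ((*v) w)" "v \<noteq> 0" and uv: "u *v v = 0"
  shows "range_dim u < range_dim w"
proof (rule range_dim_less[OF sub v(1)])
  show "v \<notin> range ((*v) u)"
  proof
    assume "v \<in> range ((*v) u)"
    then obtain y where "v = u *v y" by blast
    then have "inner v v = inner y (u *v v)" using hermitian_inner[OF h] by simp
    then show False using uv v(2) by simp
  qed
qed

lemma subalg_scaleR: "subalg T \<Longrightarrow> x \<in> T \<Longrightarrow> c *\<^sub>R x \<in> T"
  using subalgD(3)[of T x x "complex_of_real c"] by (simp add: cscale_of_real)

text \<open>Spectral projections are obtained from a nonzero Hermitian element of minimal rank in a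
  subalgebra: every Hermitian element built from it that kills a vector of its range has
  smaller rank, hence vanishes.\<close>

definition min_rank_hermitian :: "'n::finite cmat set \<Rightarrow> 'n cmat \<Rightarrow> bool" where
  "min_rank_hermitian T w \<longleftrightarrow> w \<in> T \<and> adj w = w \<and> w \<noteq> 0 \<and>
     (\<forall>u\<in>T. adj u = u \<and> u \<noteq> 0 \<longrightarrow> range_dim w \<le> range_dim u)"

lemma min_rank_hermitian_exists:
  assumes "t \<in> T" "adj t = t" "t \<noteq> 0"
  shows "\<exists>w. min_rank_hermitian T w"
  using ex_has_least_nat[of "\<lambda>w. w \<in> T \<and> adj w = w \<and> w \<noteq> 0" t range_dim] assms
  unfolding min_rank_hermitian_def by blast

lemma min_rank_hermitian_vanish:
  assumes w: "min_rank_hermitian T w" and u: "u \<in> T" "adj u = u"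
    and sub: "range ((*v) u) \<subseteq> range ((*v) w)"
    and v: "v \<in> range ((*v) w)" "v \<noteq> 0" "u *v v = 0"
  shows "u = 0"
proof (rule ccontr)
  assume "u \<noteq> 0"
  then have "range_dim w \<le> range_dim u" using w u by (simp add: min_rank_hermitian_def)
  moreover have "range_dim u < range_dim w" by (rule hermitian_range_dim_less[OF u(2) sub v])
  ultimately show False by simp
qed

lemma min_rank_hermitian_square:
  assumes T: "subalg T" and w: "min_rank_hermitian T w"
  shows "\<exists>l. l \<noteq> 0 \<and> w ** w = l *\<^sub>R w"
proof -
  have wT: "w \<in> T" and wh: "adj w = w" and wnz: "w \<noteq> 0"
    using w by (auto simp: min_rank_hermitian_def)
  obtain v l where v: "v \<noteq> 0" "l \<noteq> 0" "w *v v = l *\<^sub>R v"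
    using hermitian_eigen[OF wh wnz] by blast
  have "w ** w - l *\<^sub>R w = 0"
  proof (rule min_rank_hermitian_vanish[OF w])
    show "w ** w - l *\<^sub>R w \<in> T" using wT subalg_scaleR[OF T] by (intro subalgD[OF T])
    show "adj (w ** w - l *\<^sub>R w) = w ** w - l *\<^sub>R w"
      using wh by (simp add: adj_matrix_mult flip: cscale_of_real)
    have "(w ** w - l *\<^sub>R w) *v x = w *v (w *v x - l *\<^sub>R x)" for x
      by (simp add: matrix_vector_mult_diff_rdistrib matrix_vector_mult_diff_distrib
          scaleR_matrix_vector_mult cmatrix_vector_mult_scaleR flip: matrix_vector_mul_assoc)
    then show "range ((*v) (w ** w - l *\<^sub>R w)) \<subseteq> range ((*v) w)" by auto
    show "v \<in> range ((*v) w)"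
      using v by (intro range_eqI[of _ _ "(1 / l) *\<^sub>R v"]) (simp add: cmatrix_vector_mult_scaleR)
    show "(w ** w - l *\<^sub>R w) *v v = 0"
      using v by (simp add: matrix_vector_mult_diff_rdistrib scaleR_matrix_vector_mult
          cmatrix_vector_mult_scaleR flip: matrix_vector_mul_assoc)
  qed (use v in simp)
  then show ?thesis using v(2) by auto
qed

lemma min_rank_hermitian_eigenproj:
  assumes T: "subalg T" and w: "min_rank_hermitian T w"
    and r: "r \<in> T" "is_proj r" "range ((*v) r) \<subseteq> range ((*v) w)"
    and x: "x \<in> T" "adj x = x" "x ** r = r ** x" "x ** r \<noteq> 0"
  shows "\<exists>m. x ** r = m *\<^sub>R r"
proof -
  have xrh: "adj (x ** r) = x ** r" using x(2,3) r(2) by (simp add: adj_matrix_mult is_proj_def)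
  obtain v m where v: "v \<noteq> 0" "m \<noteq> 0" "(x ** r) *v v = m *\<^sub>R v"
    using hermitian_eigen[OF xrh x(4)] by blast
  have vr: "v = r *v ((1 / m) *\<^sub>R (x *v v))"
  proof -
    have "v = (1 / m) *\<^sub>R ((x ** r) *v v)" using v by simp
    then show ?thesis by (simp add: x(3) cmatrix_vector_mult_scaleR flip: matrix_vector_mul_assoc)
  qed
  have rv: "r *v v = v"
    using r(2) by (subst (1 2) vr) (simp add: is_proj_def matrix_vector_mul_assoc)
  have "x ** r - m *\<^sub>R r = 0"
  proof (rule min_rank_hermitian_vanish[OF w])
    show "x ** r - m *\<^sub>R r \<in> T" using x(1) r(1) subalg_scaleR[OF T] by (intro subalgD[OF T])
    show "adj (x ** r - m *\<^sub>R r) = x ** r - m *\<^sub>R r"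
      using xrh r(2) by (simp add: is_proj_def flip: cscale_of_real)
    have "(x ** r - m *\<^sub>R r) *v y = r *v (x *v y - m *\<^sub>R y)" for y
      by (simp add: x(3) matrix_vector_mult_diff_rdistrib matrix_vector_mult_diff_distrib
          scaleR_matrix_vector_mult cmatrix_vector_mult_scaleR flip: matrix_vector_mul_assoc)
    then show "range ((*v) (x ** r - m *\<^sub>R r)) \<subseteq> range ((*v) w)" using r(3) by auto
    show "v \<in> range ((*v) w)" using vr r(3) by auto
    show "(x ** r - m *\<^sub>R r) *v v = 0"
      using v rv by (simp add: matrix_vector_mult_diff_rdistrib scaleR_matrix_vector_mult)
  qed (use v in simp)
  then show ?thesis by auto
qed

lemma spectral_projection:
  fixes t :: "'n::finite cmat"
  assumes h: "adj t = t" and nz: "t \<noteq> 0"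
  shows "\<exists>r \<mu>. r \<in> subalg hull {t} \<and> is_proj r \<and> r \<noteq> 0 \<and> t ** r = \<mu> *\<^sub>R r"
proof -
  let ?T = "subalg hull {t}"
  have T: "subalg ?T" by (rule subalg_hull)
  have tT: "t \<in> ?T" by (simp add: hull_inc)
  obtain w where w: "min_rank_hermitian ?T w"
    using min_rank_hermitian_exists[OF tT h nz] by blast
  then have wT: "w \<in> ?T" and wh: "adj w = w" and wnz: "w \<noteq> 0"
    by (auto simp: min_rank_hermitian_def)
  obtain l where l: "l \<noteq> 0" "w ** w = l *\<^sub>R w"
    using min_rank_hermitian_square[OF T w] by blast
  define r where "r = (1 / l) *\<^sub>R w"
  have rT: "r \<in> ?T" unfolding r_def by (rule subalg_scaleR[OF T wT])
  have r: "is_proj r" "r \<noteq> 0"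
    using l wh wnz by (auto simp: r_def is_proj_def scaleR_matrix_mult_left scaleR_matrix_mult_right
        simp flip: cscale_of_real)
  have "r *v x = w *v ((1 / l) *\<^sub>R x)" for x
    by (simp add: r_def scaleR_matrix_vector_mult cmatrix_vector_mult_scaleR)
  then have rw: "range ((*v) r) \<subseteq> range ((*v) w)" by auto
  have tr: "t ** r = r ** t" using subalg_hull_commute[OF rT] by simp
  have "t ** r \<noteq> 0"
  proof
    assume "t ** r = 0"
    moreover have "subalg {x. x ** r = 0}"
      by (rule subalgI) (auto simp: matrix_add_rdistrib simp flip: matrix_mul_assoc)
    ultimately have "r ** r = 0" using hull_minimal[of "{t}" "{x. x ** r = 0}" subalg] rT by auto
    then show False using r by (simp add: is_proj_def)
  qed
  then obtain m where "t ** r = m *\<^sub>R r"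
    using min_rank_hermitian_eigenproj[OF T w rT r(1) rw tT h tr] by blast
  then show ?thesis using rT r by blast
qed

section \<open>Minimal and central projections\<close>

lemma unital_star_subalg_one: "unital_star_subalg S \<Longrightarrow> mat 1 \<in> S"
  and unital_star_subalg_zero: "unital_star_subalg S \<Longrightarrow> 0 \<in> S"
  and unital_star_subalg_add: "unital_star_subalg S \<Longrightarrow> x \<in> S \<Longrightarrow> y \<in> S \<Longrightarrow> x + y \<in> S"
  and unital_star_subalg_mult: "unital_star_subalg S \<Longrightarrow> x \<in> S \<Longrightarrow> y \<in> S \<Longrightarrow> x ** y \<in> S"
  and unital_star_subalg_cscale: "unital_star_subalg S \<Longrightarrow> x \<in> S \<Longrightarrow> cscale c x \<in> S"
  and unital_star_subalg_adj: "unital_star_subalg S \<Longrightarrow> x \<in> S \<Longrightarrow> adj x \<in> S"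
  by (auto simp: unital_star_subalg_def)

lemma unital_star_subalg_subalg: "unital_star_subalg S \<Longrightarrow> subalg S"
  by (auto simp: unital_star_subalg_def subalg_def)

lemmas unital_star_subalg_closed =
  unital_star_subalg_one unital_star_subalg_zero unital_star_subalg_add unital_star_subalg_mult
  unital_star_subalg_cscale unital_star_subalg_adj

lemma unital_star_subalg_diff: "unital_star_subalg S \<Longrightarrow> x \<in> S \<Longrightarrow> y \<in> S \<Longrightarrow> x - y \<in> S"
  by (rule subalgD(4)[OF unital_star_subalg_subalg])

lemma unital_star_subalg_sum: "unital_star_subalg S \<Longrightarrow> (\<And>i. i \<in> I \<Longrightarrow> F i \<in> S) \<Longrightarrow> sum F I \<in> S"
  by (induction I rule: infinite_finite_induct) (auto intro: unital_star_subalg_zero unital_star_subalg_add)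

lemma proj_range_dim_less:
  fixes p q :: "'n::finite cmat"
  assumes p: "is_proj p" and q: "is_proj q" and qp: "q ** p = q" and ne: "q \<noteq> p"
  shows "range_dim q < range_dim p"
proof -
  have pq: "p ** q = q" by (rule proj_below_sym[OF p q qp])
  obtain x where x: "p *v x \<notin> range ((*v) q)"
  proof (rule ccontr)
    assume "\<not> thesis"
    then have "\<forall>x. \<exists>y. p *v x = q *v y" using that by blast
    then have "(q ** p) *v x = p *v x" for x
      using q by (metis is_proj_def matrix_vector_mul_assoc)
    then show False using qp ne by (simp add: matrix_eq)
  qed
  show ?thesis
  proof (rule range_dim_less[OF _ _ x])
    show "range ((*v) q) \<subseteq> range ((*v) p)"
      using pq by (metis image_subsetI matrix_vector_mul_assoc rangeI)
  qed simp
qed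

lemma exists_minimal_proj_below:
  fixes P :: "'n::finite cmat"
  assumes "Pr P" "is_proj P" "P \<noteq> 0"
  shows "\<exists>q. Pr q \<and> is_proj q \<and> q \<noteq> 0 \<and> q ** P = q \<and>
            (\<forall>q'. Pr q' \<and> is_proj q' \<and> q' \<noteq> 0 \<and> q' ** q = q' \<longrightarrow> q' = q)"
proof -
  let ?H = "\<lambda>q. Pr q \<and> is_proj q \<and> q \<noteq> 0 \<and> q ** P = q"
  have "?H P" using assms by (simp add: is_proj_def)
  then obtain q where q: "?H q" and qmin: "\<And>q'. ?H q' \<Longrightarrow> range_dim q \<le> range_dim q'"
    using ex_has_least_nat[of ?H P range_dim] by blast
  have "q' = q" if q': "Pr q'" "is_proj q'" "q' \<noteq> 0" "q' ** q = q'" for q'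
  proof (rule ccontr)
    assume "q' \<noteq> q"
    then have "range_dim q' < range_dim q" using q q' by (intro proj_range_dim_less) auto
    moreover have "?H q'" using q q' by (metis matrix_mul_assoc)
    ultimately show False using qmin by fastforce
  qed
  then show ?thesis using q by blast
qed

lemma summandsD:
  assumes "z \<in> summands S"
  shows "z \<in> S" "is_proj z" "z \<noteq> 0" "\<And>x. x \<in> S \<Longrightarrow> z ** x = x ** z"
    "\<And>q. central_proj S q \<Longrightarrow> q \<noteq> 0 \<Longrightarrow> q ** z = q \<Longrightarrow> q = z"
  using assms unfolding summands_def central_proj_def by blast+

lemma min_projsD:
  assumes "f \<in> min_projs S"
  shows "f \<in> S" "is_proj f" "f \<noteq> 0"
    "\<And>q. q \<in> S \<Longrightarrow> is_proj q \<Longrightarrow> q \<noteq> 0 \<Longrightarrow> q ** f = q \<Longrightarrow> q = f"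
  using assms unfolding min_projs_def by blast+

lemma min_proj_below:
  assumes "P \<in> S" "is_proj P" "P \<noteq> 0"
  shows "\<exists>f \<in> min_projs S. f ** P = f"
  using exists_minimal_proj_below[of "\<lambda>q. q \<in> S", OF assms] by (auto simp: min_projs_def)

lemma minproj_in:
  assumes "z \<in> summands S"
  shows "minproj_in S z \<in> min_projs S" "minproj_in S z ** z = minproj_in S z"
proof -
  have "\<exists>e. e \<in> min_projs S \<and> e ** z = e"
    using min_proj_below[OF summandsD(1-3)[OF assms]] by blast
  then show "minproj_in S z \<in> min_projs S" "minproj_in S z ** z = minproj_in S z"
    unfolding minproj_in_def by (metis (mono_tags, lifting) someI_ex)+
qed

lemma minproj_in_proj:
  assumes "z \<in> summands S"
  shows "minproj_in S z \<in> S" "is_proj (minproj_in S z)" "minproj_in S z \<noteq> 0"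
  using min_projsD(1-3)[OF minproj_in(1)[OF assms]] by auto

lemma summands_orth:
  assumes S: "unital_star_subalg S" and z: "z \<in> summands S" and z': "z' \<in> summands S"
    and ne: "z \<noteq> z'"
  shows "z ** z' = 0"
proof (rule ccontr)
  assume nz: "z ** z' \<noteq> 0"
  have c: "z ** z' = z' ** z" using summandsD(4)[OF z summandsD(1)[OF z']] .
  have p: "is_proj z" "is_proj z'" using summandsD(2) z z' by auto
  have cp: "central_proj S (z ** z')"
    unfolding central_proj_def
  proof (intro conjI ballI)
    show "z ** z' \<in> S" by (rule unital_star_subalg_mult[OF S summandsD(1)[OF z] summandsD(1)[OF z']])
    show "is_proj (z ** z')" using is_proj_mult[OF p c] .
    show "z ** z' ** x = x ** (z ** z')" if "x \<in> S" for x
      using summandsD(4)[OF z that] summandsD(4)[OF z' that] by (metis matrix_mul_assoc)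
  qed
  have "z ** z' ** z = z ** z'" "z ** z' ** z' = z ** z'"
    using p c by (metis is_proj_def matrix_mul_assoc)+
  then have "z ** z' = z" "z ** z' = z'"
    using summandsD(5)[OF z cp nz] summandsD(5)[OF z' cp nz] by blast+
  then show False using ne by simp
qed

lemma summands_finite:
  assumes S: "unital_star_subalg S"
  shows "finite (summands S)"
proof (rule finiteI_independent)
  show "independent (summands S)"
    unfolding independent_explicit_finite_subsets
  proof (intro allI impI ballI)
    fix T u v
    assume T: "T \<subseteq> summands S" "finite T" and s: "(\<Sum>w\<in>T. u w *\<^sub>R w) = 0" and v: "v \<in> T"
    have vS: "v \<in> summands S" using T v by blast
    have vv: "v ** v = v" "v \<noteq> 0" using summandsD(2,3)[OF vS] by (auto simp: is_proj_def)
    have "(\<Sum>w\<in>T. u w *\<^sub>R w) ** v = (\<Sum>w\<in>T. u w *\<^sub>R (w ** v))"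
      by (simp add: matrix_sum_rdistrib scaleR_matrix_mult_left)
    also have "\<dots> = u v *\<^sub>R (v ** v) + (\<Sum>w\<in>T - {v}. u w *\<^sub>R (w ** v))"
      by (rule sum.remove[OF T(2) v])
    also have "(\<Sum>w\<in>T - {v}. u w *\<^sub>R (w ** v)) = 0"
      using T v summands_orth[OF S] by (intro sum.neutral) auto
    finally have "u v *\<^sub>R v = 0" using s vv by simp
    then show "u v = 0" using vv by simp
  qed
qed

lemma summand_mult_sum_summands:
  assumes S: "unital_star_subalg S" and z: "z \<in> summands S"
  shows "z ** (\<Sum>w\<in>summands S. w) = z"
proof -
  have "z ** (\<Sum>w\<in>summands S. w) = (\<Sum>w\<in>summands S. z ** w)"
    by (rule matrix_sum_ldistrib)
  also have "\<dots> = z ** z + (\<Sum>w\<in>summands S - {z}. z ** w)"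
    by (rule sum.remove[OF summands_finite[OF S] z])
  also have "(\<Sum>w\<in>summands S - {z}. z ** w) = 0"
    using z summands_orth[OF S] by (intro sum.neutral) auto
  finally show ?thesis using summandsD(2)[OF z] by (simp add: is_proj_def)
qed

lemma sum_summands:
  assumes S: "unital_star_subalg S"
  shows "(\<Sum>z\<in>summands S. z) = mat 1"
proof (rule ccontr)
  define Q where "Q = (\<Sum>z\<in>summands S. z)"
  assume "Q \<noteq> mat 1"
  have zQ: "z ** Q = z" if "z \<in> summands S" for z
    unfolding Q_def by (rule summand_mult_sum_summands[OF S that])
  have QS: "Q \<in> S" unfolding Q_def by (rule unital_star_subalg_sum[OF S summandsD(1)])
  have Qc: "Q ** x = x ** Q" if x: "x \<in> S" for x
    unfolding Q_def matrix_sum_ldistrib matrix_sum_rdistrib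
    by (rule sum.cong[OF refl summandsD(4)[OF _ x]])
  have Qadj: "adj Q = Q"
    unfolding Q_def adj_sum by (rule sum.cong[OF refl]) (simp add: summandsD(2)[unfolded is_proj_def])
  have "Q ** Q = Q"
    unfolding Q_def[of] matrix_sum_rdistrib using zQ[unfolded Q_def] by simp
  then have Qp: "is_proj Q" using Qadj by (simp add: is_proj_def)
  have "central_proj S (mat 1 - Q)"
    unfolding central_proj_def
  proof (intro conjI ballI)
    show "mat 1 - Q \<in> S" by (rule unital_star_subalg_diff[OF S unital_star_subalg_one[OF S] QS])
    show "is_proj (mat 1 - Q)" by (rule is_proj_complement[OF Qp])
    show "(mat 1 - Q) ** x = x ** (mat 1 - Q)" if "x \<in> S" for x
      using Qc[OF that] by (simp add: matrix_diff_ldistrib matrix_diff_rdistrib)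
  qed
  moreover have "mat 1 - Q \<noteq> 0" using \<open>Q \<noteq> mat 1\<close> by simp
  ultimately obtain q where q: "central_proj S q" "q \<noteq> 0" "q ** (mat 1 - Q) = q"
    and qmin: "\<forall>q'. central_proj S q' \<and> is_proj q' \<and> q' \<noteq> 0 \<and> q' ** q = q' \<longrightarrow> q' = q"
    using exists_minimal_proj_below[of "central_proj S", OF _ is_proj_complement[OF Qp]] by blast
  have "q \<in> summands S"
    unfolding summands_def using q(1,2) qmin unfolding central_proj_def by blast
  then have "q ** (mat 1 - Q) = 0" by (simp add: matrix_diff_ldistrib zQ)
  then show False using q by simp
qed

lemma min_proj_hermitian_scalar:
  assumes S: "unital_star_subalg S" and f: "f \<in> min_projs S"
    and h: "h \<in> S" "adj h = h" "h ** f = h" "f ** h = h"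
  shows "\<exists>\<mu>::real. h = \<mu> *\<^sub>R f"
proof (cases "h = 0")
  case True
  then show ?thesis by (intro exI[of _ 0]) simp
next
  case False
  obtain r \<mu> where r: "r \<in> subalg hull {h}" "is_proj r" "r \<noteq> 0" and hr: "h ** r = \<mu> *\<^sub>R r"
    using spectral_projection[OF h(2) False] by blast
  have "subalg {w \<in> S. w ** f = w \<and> f ** w = w}"
  proof (rule subalgI)
    fix x y assume x: "x \<in> {w \<in> S. w ** f = w \<and> f ** w = w}" and y: "y \<in> {w \<in> S. w ** f = w \<and> f ** w = w}"
    then show "x + y \<in> {w \<in> S. w ** f = w \<and> f ** w = w}"
      using S by (simp add: unital_star_subalg_closed matrix_add_ldistrib matrix_add_rdistrib)
    have "x ** y ** f = x ** y" using y by (simp flip: matrix_mul_assoc)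
    moreover have "f ** (x ** y) = x ** y" using x by (simp add: matrix_mul_assoc)
    ultimately show "x ** y \<in> {w \<in> S. w ** f = w \<and> f ** w = w}"
      using x y S by (simp add: unital_star_subalg_closed)
  qed (use S in \<open>simp add: unital_star_subalg_cscale\<close>)
  then have "subalg hull {h} \<subseteq> {w \<in> S. w ** f = w \<and> f ** w = w}"
    using h by (intro hull_minimal) auto
  then have "r \<in> S" "r ** f = r" using r(1) by auto
  then have "r = f" using min_projsD(4)[OF f] r(2,3) by blast
  then show ?thesis using hr h(3) by auto
qed

lemma min_proj_compress:
  assumes S: "unital_star_subalg S" and f: "f \<in> min_projs S" and x: "x \<in> S"
  shows "\<exists>c. f ** x ** f = cscale c f"
proof -
  have fS: "f \<in> S" and fp: "f ** f = f" "adj f = f"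
    using min_projsD(1,2)[OF f] by (auto simp: is_proj_def)
  define y where "y = f ** x ** f"
  have yS: "y \<in> S" "adj y \<in> S" unfolding y_def using S fS x by (simp_all add: unital_star_subalg_closed)
  have "f ** y = y" "f ** adj y = adj y"
    using fp unfolding y_def by (simp_all add: adj_matrix_mult matrix_mul_assoc)
  moreover have "y ** f = y" "adj y ** f = adj y"
    using fp unfolding y_def by (simp_all add: adj_matrix_mult flip: matrix_mul_assoc)
  ultimately have fy: "f ** y = y" "y ** f = y" "f ** adj y = adj y" "adj y ** f = adj y"
    by auto
  define h1 where "h1 = cscale (1 / 2) (y + adj y)"
  define h2 where "h2 = cscale (- \<i> / 2) (y - adj y)"
  obtain m1 :: real where m1: "h1 = m1 *\<^sub>R f"
  proof (rule exE[OF min_proj_hermitian_scalar[OF S f]])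
    show "h1 \<in> S" unfolding h1_def using S yS by (simp add: unital_star_subalg_closed)
    show "adj h1 = h1" by (simp add: h1_def vec_eq_iff)
    show "h1 ** f = h1" "f ** h1 = h1"
      using fy by (simp_all add: h1_def matrix_add_ldistrib matrix_add_rdistrib)
  qed
  obtain m2 :: real where m2: "h2 = m2 *\<^sub>R f"
  proof (rule exE[OF min_proj_hermitian_scalar[OF S f]])
    show "h2 \<in> S" unfolding h2_def using S yS by (simp add: unital_star_subalg_closed unital_star_subalg_diff)
    show "adj h2 = h2" by (simp add: h2_def vec_eq_iff algebra_simps)
    show "h2 ** f = h2" "f ** h2 = h2"
      using fy by (simp_all add: h2_def matrix_diff_ldistrib matrix_diff_rdistrib)
  qed
  have "y = h1 + cscale \<i> h2" by (simp add: h1_def h2_def vec_eq_iff field_simps)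
  also have "\<dots> = cscale (complex_of_real m1 + \<i> * complex_of_real m2) f"
    by (simp add: m1 m2 cscale_add_left flip: cscale_of_real)
  finally show ?thesis unfolding y_def by blast
qed

definition star_ideal :: "'n::finite cmat set \<Rightarrow> 'n cmat set \<Rightarrow> bool" where
  "star_ideal S J \<longleftrightarrow> 0 \<in> J \<and> J \<subseteq> S \<and> (\<forall>a\<in>J. \<forall>b\<in>J. a + b \<in> J) \<and> (\<forall>c. \<forall>a\<in>J. cscale c a \<in> J) \<and>
     (\<forall>a\<in>J. \<forall>s\<in>S. s ** a \<in> J \<and> a ** s \<in> J) \<and> (\<forall>a\<in>J. adj a \<in> J)"

lemma star_idealD:
  assumes "star_ideal S J"
  shows "0 \<in> J" "a \<in> J \<Longrightarrow> a \<in> S" "a \<in> J \<Longrightarrow> b \<in> J \<Longrightarrow> a + b \<in> J"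
    "a \<in> J \<Longrightarrow> cscale c a \<in> J" "a \<in> J \<Longrightarrow> s \<in> S \<Longrightarrow> s ** a \<in> J"
    "a \<in> J \<Longrightarrow> s \<in> S \<Longrightarrow> a ** s \<in> J" "a \<in> J \<Longrightarrow> adj a \<in> J"
  using assms by (auto simp: star_ideal_def)

lemma star_ideal_orth_proj:
  assumes S: "unital_star_subalg S" and J: "star_ideal S J" and q: "q \<in> J" "is_proj q"
    and x: "x \<in> J" "(mat 1 - q) ** x \<noteq> 0"
  shows "\<exists>r\<in>J. is_proj r \<and> r \<noteq> 0 \<and> q ** r = 0"
proof -
  let ?q' = "mat 1 - q"
  have q'S: "?q' \<in> S" using S star_idealD(2)[OF J q(1)] by (simp add: unital_star_subalg_closed unital_star_subalg_diff)
  have q'q': "?q' ** ?q' = ?q'" using is_proj_complement[OF q(2)] by (simp add: is_proj_def)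
  have yJ: "?q' ** x \<in> J" by (rule star_idealD(5)[OF J x(1) q'S])
  define t where "t = ?q' ** x ** adj (?q' ** x)"
  have tJ: "t \<in> J"
    unfolding t_def by (rule star_idealD(6)[OF J yJ unital_star_subalg_adj[OF S star_idealD(2)[OF J yJ]]])
  have t: "adj t = t" "t \<noteq> 0"
    using x(2) mult_adj_self_eq_0[of "?q' ** x"] by (auto simp: t_def adj_matrix_mult)
  obtain r where r: "r \<in> subalg hull {t}" "is_proj r" "r \<noteq> 0"
    using spectral_projection[OF t] by blast
  have "subalg {w \<in> J. ?q' ** w = w}"
  proof (rule subalgI)
    fix a b assume a: "a \<in> {w \<in> J. ?q' ** w = w}" and b: "b \<in> {w \<in> J. ?q' ** w = w}"
    then show "a + b \<in> {w \<in> J. ?q' ** w = w}"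
      using star_idealD(3)[OF J] by (simp add: matrix_add_ldistrib)
    show "a ** b \<in> {w \<in> J. ?q' ** w = w}"
      using a b star_idealD(2,6)[OF J] by (simp add: matrix_mul_assoc)
  qed (use star_idealD(4)[OF J] in simp)
  moreover have "?q' ** t = t" using q'q' by (simp add: t_def matrix_mul_assoc)
  ultimately have "subalg hull {t} \<subseteq> {w \<in> J. ?q' ** w = w}"
    using tJ by (intro hull_minimal) auto
  then have rJ: "r \<in> J" and q'r: "?q' ** r = r" using r(1) by auto
  have "q ** r = (q ** ?q') ** r" using q'r by (simp flip: matrix_mul_assoc)
  also have "q ** ?q' = 0" using q(2) by (simp add: is_proj_def matrix_diff_ldistrib)
  finally have "q ** r = 0" by simp
  then show ?thesis using rJ r(2,3) by blast
qed

lemma star_ideal_unit: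
  fixes S J :: "'n::finite cmat set"
  assumes S: "unital_star_subalg S" and J: "star_ideal S J"
  shows "\<exists>q\<in>J. is_proj q \<and> (\<forall>x\<in>J. q ** x = x)"
proof -
  have "0 \<in> J \<and> is_proj 0" using star_idealD(1)[OF J] by (simp add: is_proj_def)
  moreover have "range_dim q \<le> DIM(complex^'n)" for q :: "'n cmat"
    using dim_subset_UNIV[of "range ((*v) q)"] by (simp add: range_dim_def)
  then have "\<forall>q. q \<in> J \<and> is_proj q \<longrightarrow> range_dim q < Suc DIM(complex^'n)"
    by (simp add: less_Suc_eq_le)
  ultimately obtain q where q: "q \<in> J" "is_proj q"
    and qmax: "\<forall>q'. q' \<in> J \<and> is_proj q' \<longrightarrow> range_dim q' \<le> range_dim q"
    using ex_has_greatest_nat[of "\<lambda>q. q \<in> J \<and> is_proj q" 0 range_dim] by blast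
  have "q ** x = x" if x: "x \<in> J" for x
  proof (rule ccontr)
    assume "q ** x \<noteq> x"
    then have "(mat 1 - q) ** x \<noteq> 0" by (simp add: matrix_diff_rdistrib)
    then obtain r where r: "r \<in> J" "is_proj r" "r \<noteq> 0" "q ** r = 0"
      using star_ideal_orth_proj[OF S J q x] by blast
    have "r ** q = adj (q ** r)" using r(2) q(2) by (simp add: adj_matrix_mult is_proj_def)
    then have rq: "r ** q = 0" using r(4) by simp
    have qr: "is_proj (q + r)"
      using q(2) r(2,4) rq by (simp add: is_proj_def matrix_add_ldistrib matrix_add_rdistrib)
    have "range_dim q < range_dim (q + r)"
      using q(2) r(3,4) qr by (intro proj_range_dim_less) (auto simp: is_proj_def matrix_add_ldistrib)
    moreover have "range_dim (q + r) \<le> range_dim q"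
      using qmax star_idealD(3)[OF J q(1) r(1)] qr by blast
    ultimately show False by simp
  qed
  then show ?thesis using q by blast
qed

lemma star_ideal_unit_central:
  assumes J: "star_ideal S J" and q: "q \<in> J" "is_proj q" "\<forall>x\<in>J. q ** x = x" and s: "s \<in> S"
  shows "q ** s = s ** q"
proof -
  have right: "x ** q = x" if "x \<in> J" for x
  proof -
    have "x ** q = adj (q ** adj x)" using q(2) by (simp add: adj_matrix_mult is_proj_def)
    also have "\<dots> = x" using q(3) star_idealD(7)[OF J that] by simp
    finally show ?thesis .
  qed
  have "q ** (s ** q) = s ** q" using q(3) star_idealD(5)[OF J q(1) s] by blast
  then have "s ** q = q ** s ** q" by (simp add: matrix_mul_assoc)
  also have "\<dots> = q ** s" using right star_idealD(6)[OF J q(1) s] by simp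
  finally show ?thesis by simp
qed

definition annihilator :: "'n::finite cmat set \<Rightarrow> 'n cmat \<Rightarrow> 'n cmat set" where
  "annihilator S f = {w \<in> S. \<forall>x\<in>S. w ** x ** f = 0 \<and> f ** x ** w = 0}"

lemma star_ideal_annihilator:
  assumes S: "unital_star_subalg S" and f: "adj f = f"
  shows "star_ideal S (annihilator S f)"
  unfolding star_ideal_def
proof (intro conjI ballI allI)
  show "0 \<in> annihilator S f" "annihilator S f \<subseteq> S"
    using unital_star_subalg_zero[OF S] by (auto simp: annihilator_def)
next
  fix a b assume a: "a \<in> annihilator S f" and b: "b \<in> annihilator S f"
  then show "a + b \<in> annihilator S f"
    using S by (simp add: annihilator_def unital_star_subalg_closed matrix_add_ldistrib matrix_add_rdistrib)
next
  fix c a assume "a \<in> annihilator S f"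
  then show "cscale c a \<in> annihilator S f" using S by (simp add: annihilator_def unital_star_subalg_closed)
next
  fix a s assume a: "a \<in> annihilator S f" and s: "s \<in> S"
  have aS: "a \<in> S" and ax: "\<And>x. x \<in> S \<Longrightarrow> a ** x ** f = 0 \<and> f ** x ** a = 0"
    using a by (auto simp: annihilator_def)
  have "s ** a ** x ** f = 0" "f ** x ** (s ** a) = 0" if x: "x \<in> S" for x
  proof -
    have "s ** a ** x ** f = s ** (a ** x ** f)" by (simp add: matrix_mul_assoc)
    then show "s ** a ** x ** f = 0" using ax[OF x] by simp
    have "f ** x ** (s ** a) = f ** (x ** s) ** a" by (simp add: matrix_mul_assoc)
    then show "f ** x ** (s ** a) = 0" using ax[OF unital_star_subalg_mult[OF S x s]] by simp
  qed
  then show "s ** a \<in> annihilator S f"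
    using unital_star_subalg_mult[OF S s aS] by (simp add: annihilator_def)
  have "a ** s ** x ** f = 0" "f ** x ** (a ** s) = 0" if x: "x \<in> S" for x
  proof -
    have "a ** s ** x ** f = a ** (s ** x) ** f" by (simp add: matrix_mul_assoc)
    then show "a ** s ** x ** f = 0" using ax[OF unital_star_subalg_mult[OF S s x]] by simp
    have "f ** x ** (a ** s) = f ** x ** a ** s" by (simp add: matrix_mul_assoc)
    then show "f ** x ** (a ** s) = 0" using ax[OF x] by simp
  qed
  then show "a ** s \<in> annihilator S f"
    using unital_star_subalg_mult[OF S aS s] by (simp add: annihilator_def)
next
  fix a assume a: "a \<in> annihilator S f"
  have aS: "a \<in> S" and ax: "\<And>x. x \<in> S \<Longrightarrow> a ** x ** f = 0 \<and> f ** x ** a = 0"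
    using a by (auto simp: annihilator_def)
  have "adj a ** x ** f = adj (f ** adj x ** a)" "f ** x ** adj a = adj (a ** adj x ** f)" for x
    using f by (simp_all add: adj_matrix_mult matrix_mul_assoc)
  then show "adj a \<in> annihilator S f"
    using ax unital_star_subalg_adj[OF S] aS by (simp add: annihilator_def)
qed

lemma summand_mult_central_proj:
  assumes S: "unital_star_subalg S" and z: "z \<in> summands S" and q: "central_proj S q"
    and f: "f \<in> S" "is_proj f" "f \<noteq> 0" "f ** z = f" "q ** f = 0"
  shows "z ** q = 0"
proof -
  have qS: "q \<in> S" and qp: "is_proj q" and qc: "\<And>s. s \<in> S \<Longrightarrow> q ** s = s ** q"
    using q by (auto simp: central_proj_def)
  have zS: "z \<in> S" and zp: "is_proj z" and zc: "\<And>s. s \<in> S \<Longrightarrow> z ** s = s ** z"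
    using summandsD(1,2,4)[OF z] by auto
  define q' where "q' = z ** (mat 1 - q)"
  have "central_proj S q'"
    unfolding central_proj_def
  proof (intro conjI ballI)
    show "q' \<in> S" unfolding q'_def using S zS qS by (simp add: unital_star_subalg_closed unital_star_subalg_diff)
    show "is_proj q'" unfolding q'_def using zp is_proj_complement[OF qp] qc[OF zS]
      by (intro is_proj_mult) (simp_all add: matrix_diff_ldistrib matrix_diff_rdistrib)
    show "q' ** s = s ** q'" if "s \<in> S" for s
      using zc[OF that] qc[OF that] unfolding q'_def
      by (simp add: matrix_diff_ldistrib matrix_diff_rdistrib) (metis matrix_mul_assoc)
  qed
  moreover have "q' ** f = f"
    using proj_below_sym[OF zp f(2,4)] qc[OF f(1)] f(5)
    by (simp add: q'_def matrix_diff_ldistrib matrix_diff_rdistrib flip: matrix_mul_assoc)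
  then have "q' \<noteq> 0" using f(3) by auto
  moreover have "q' ** z = q'"
  proof -
    have "q' ** z = z ** ((mat 1 - q) ** z)" by (simp add: q'_def matrix_mul_assoc)
    also have "(mat 1 - q) ** z = z ** (mat 1 - q)"
      using qc[OF zS] by (simp add: matrix_diff_ldistrib matrix_diff_rdistrib)
    also have "z ** (z ** (mat 1 - q)) = q'"
      using zp by (simp add: q'_def is_proj_def matrix_mul_assoc)
    finally show ?thesis .
  qed
  ultimately have "q' = z" by (rule summandsD(5)[OF z])
  then show ?thesis using zp by (simp add: q'_def is_proj_def matrix_diff_ldistrib)
qed

text \<open>The unit of the annihilator of f is a central projection orthogonal to f, so by minimality
  it is orthogonal to the whole summand containing f.\<close>

lemma annihilator_mult_summand:
  assumes S: "unital_star_subalg S" and z: "z \<in> summands S"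
    and f: "f \<in> S" "is_proj f" "f \<noteq> 0" "f ** z = f" and w: "w \<in> annihilator S f"
  shows "w ** z = 0"
proof -
  have J: "star_ideal S (annihilator S f)"
    using f(2) by (intro star_ideal_annihilator[OF S]) (simp add: is_proj_def)
  obtain q where qJ: "q \<in> annihilator S f" and q: "is_proj q" and unit: "\<forall>x\<in>annihilator S f. q ** x = x"
    using star_ideal_unit[OF S J] by blast
  have qc: "q ** s = s ** q" if "s \<in> S" for s by (rule star_ideal_unit_central[OF J qJ q unit that])
  have "central_proj S q" using qJ q qc by (simp add: central_proj_def annihilator_def)
  moreover have "q ** f = 0" using qJ unital_star_subalg_one[OF S] by (auto simp: annihilator_def)
  ultimately have zq: "z ** q = 0" by (rule summand_mult_central_proj[OF S z _ f])
  have wzJ: "w ** z \<in> annihilator S f" by (rule star_idealD(6)[OF J w summandsD(1)[OF z]])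
  have "w ** z = q ** (w ** z)" using unit wzJ by simp
  also have "\<dots> = w ** (z ** q)"
    using qc[OF star_idealD(2)[OF J wzJ]] by (simp add: matrix_mul_assoc)
  finally show ?thesis using zq by simp
qed

lemma central_scalar_on_summand:
  assumes S: "unital_star_subalg S" and x: "x \<in> S" "\<forall>s\<in>S. x ** s = s ** x"
    and z: "z \<in> summands S"
  shows "\<exists>c. x ** z = cscale c z"
proof -
  define f where "f = minproj_in S z"
  have fM: "f \<in> min_projs S" and fz: "f ** z = f" using minproj_in[OF z] by (auto simp: f_def)
  have fS: "f \<in> S" and fp: "is_proj f" "f \<noteq> 0" using min_projsD[OF fM] by auto
  obtain c where c: "f ** x ** f = cscale c f" using min_proj_compress[OF S fM x(1)] by blast
  have xf: "x ** f = cscale c f"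
    using c x(2) fS fp(1) by (metis is_proj_def matrix_mul_assoc)
  define y where "y = x - cscale c (mat 1)"
  have yS: "y \<in> S" unfolding y_def using S x(1) by (simp add: unital_star_subalg_closed unital_star_subalg_diff)
  have yc: "y ** s = s ** y" if "s \<in> S" for s
    using x(2) that by (simp add: y_def matrix_diff_ldistrib matrix_diff_rdistrib)
  have yf: "y ** f = 0" "f ** y = 0"
    using xf yc[OF fS] by (simp_all add: y_def matrix_diff_rdistrib)
  have "y \<in> annihilator S f"
    unfolding annihilator_def
  proof (intro CollectI conjI ballI yS)
    fix s assume s: "s \<in> S"
    show "y ** s ** f = 0" using yc[OF s] yf by (simp flip: matrix_mul_assoc)
    have "f ** s ** y = f ** (y ** s)" using yc[OF s] by (simp flip: matrix_mul_assoc)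
    then show "f ** s ** y = 0" using yf by (simp add: matrix_mul_assoc)
  qed
  then have "y ** z = 0" by (rule annihilator_mult_summand[OF S z fS fp fz])
  then show ?thesis by (auto simp: y_def matrix_diff_rdistrib)
qed

lemma proj_link_nonzero:
  assumes S: "unital_star_subalg S" and z: "z \<in> summands S"
    and f: "f \<in> S" "is_proj f" "f \<noteq> 0" "f ** z = f"
    and g: "g \<in> S" "is_proj g" "g \<noteq> 0" "g ** z = g"
  shows "\<exists>x\<in>S. g ** x ** f \<noteq> 0"
proof (rule ccontr)
  assume "\<not> ?thesis"
  then have gxf: "g ** x ** f = 0" if "x \<in> S" for x using that by blast
  have "f ** x ** g = adj (g ** adj x ** f)" for x
    using f(2) g(2) by (simp add: is_proj_def adj_matrix_mult matrix_mul_assoc)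
  then have "g \<in> annihilator S f"
    using g(1) gxf unital_star_subalg_adj[OF S] by (simp add: annihilator_def)
  then have "g ** z = 0" by (rule annihilator_mult_summand[OF S z f])
  then show False using g by simp
qed

section \<open>Traces of projections\<close>

definition tracial_on :: "'n::finite cmat set \<Rightarrow> ('n cmat \<Rightarrow> complex) \<Rightarrow> bool" where
  "tracial_on S \<phi> \<longleftrightarrow> (\<forall>x\<in>S. \<forall>y\<in>S. \<phi> (x + y) = \<phi> x + \<phi> y \<and> \<phi> (x ** y) = \<phi> (y ** x)) \<and>
     (\<forall>c. \<forall>x\<in>S. \<phi> (cscale c x) = c * \<phi> x)"

lemma tracial_on_add: "tracial_on S \<phi> \<Longrightarrow> x \<in> S \<Longrightarrow> y \<in> S \<Longrightarrow> \<phi> (x + y) = \<phi> x + \<phi> y"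
  and tracial_on_commute: "tracial_on S \<phi> \<Longrightarrow> x \<in> S \<Longrightarrow> y \<in> S \<Longrightarrow> \<phi> (x ** y) = \<phi> (y ** x)"
  and tracial_on_cscale: "tracial_on S \<phi> \<Longrightarrow> x \<in> S \<Longrightarrow> \<phi> (cscale c x) = c * \<phi> x"
  by (auto simp: tracial_on_def)

lemma tracial_on_zero: "unital_star_subalg S \<Longrightarrow> tracial_on S \<phi> \<Longrightarrow> \<phi> 0 = 0"
  using tracial_on_add[OF _ unital_star_subalg_zero unital_star_subalg_zero, of S \<phi>] by simp

lemma min_proj_trace_eq:
  fixes S :: "'n::finite cmat set"
  assumes S: "unital_star_subalg S" and \<phi>: "tracial_on S \<phi>" and z: "z \<in> summands S"
    and f: "f \<in> min_projs S" "f ** z = f" and g: "g \<in> min_projs S" "g ** z = g"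
  shows "\<phi> f = \<phi> g"
proof -
  have fS: "f \<in> S" and fp: "is_proj f" "f \<noteq> 0" and gS: "g \<in> S" and gp: "is_proj g" "g \<noteq> 0"
    using min_projsD[OF f(1)] min_projsD[OF g(1)] by auto
  obtain x where x: "x \<in> S" "g ** x ** f \<noteq> 0"
    using proj_link_nonzero[OF S z fS fp f(2) gS gp g(2)] by blast
  define y where "y = g ** x ** f"
  have yS: "y \<in> S" "adj y \<in> S" unfolding y_def using S x(1) fS gS by (simp_all add: unital_star_subalg_closed)
  obtain \<mu> where \<mu>: "f ** (adj x ** g ** x) ** f = cscale \<mu> f"
    using min_proj_compress[OF S f(1)] S x(1) gS by (metis unital_star_subalg_adj unital_star_subalg_mult)
  obtain \<nu> where \<nu>: "g ** (x ** f ** adj x) ** g = cscale \<nu> g"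
    using min_proj_compress[OF S g(1)] S x(1) fS by (metis unital_star_subalg_adj unital_star_subalg_mult)
  have ff: "f ** f = f" "adj f = f" "A ** f ** f = A ** f"
    and gg: "g ** g = g" "adj g = g" "A ** g ** g = A ** g" for A :: "'n cmat"
    using fp(1) gp(1) by (auto simp: is_proj_def simp flip: matrix_mul_assoc)
  have yy: "adj y ** y = cscale \<mu> f" and yy': "y ** adj y = cscale \<nu> g"
    using \<mu> \<nu> by (simp_all add: y_def adj_matrix_mult ff gg matrix_mul_assoc)
  have yf: "y ** f = y" and gy: "g ** y = y"
    by (simp_all add: y_def matrix_mul_assoc ff gg)
  have "cscale \<mu> y = cscale \<nu> y"
  proof -
    have "y ** (adj y ** y) = (y ** adj y) ** y" by (rule matrix_mul_assoc)
    then show ?thesis using yy yy' yf gy by simp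
  qed
  then have "cscale (\<mu> - \<nu>) y = 0" by (simp add: cscale_diff_left)
  then have "\<mu> = \<nu>" using x(2) by (simp add: y_def)
  have "\<mu> \<noteq> 0" using yy x(2) adj_mult_self_eq_0[of y] fp(2) by (auto simp: y_def)
  have "\<mu> * \<phi> f = \<phi> (adj y ** y)" using yy tracial_on_cscale[OF \<phi> fS] by simp
  also have "\<dots> = \<phi> (y ** adj y)" by (rule tracial_on_commute[OF \<phi> yS(2,1)])
  also have "\<dots> = \<mu> * \<phi> g" using yy' tracial_on_cscale[OF \<phi> gS] \<open>\<mu> = \<nu>\<close> by simp
  finally show ?thesis using \<open>\<mu> \<noteq> 0\<close> by simp
qed

text \<open>Peel off one minimal projection at a time; each has the same trace as g.\<close>

lemma proj_trace_multiple:
  assumes S: "unital_star_subalg S" and z: "z \<in> summands S" and g: "g \<in> min_projs S" "g ** z = g"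
  shows "P \<in> S \<Longrightarrow> is_proj P \<Longrightarrow> P ** z = P \<Longrightarrow> \<exists>n::nat. \<forall>\<phi>. tracial_on S \<phi> \<longrightarrow> \<phi> P = of_nat n * \<phi> g"
proof (induction "range_dim P" arbitrary: P rule: less_induct)
  case less
  show ?case
  proof (cases "P = 0")
    case True
    then show ?thesis using tracial_on_zero[OF S] by (intro exI[of _ 0]) simp
  next
    case False
    obtain f where f: "f \<in> min_projs S" "f ** P = f"
      using min_proj_below[OF less.prems(1,2) False] by blast
    have fS: "f \<in> S" and fp: "is_proj f" "f \<noteq> 0" using min_projsD[OF f(1)] by auto
    have PP: "P ** P = P" "adj P = P" and ff: "f ** f = f" "adj f = f"
      using less.prems(2) fp(1) by (auto simp: is_proj_def)
    have Pf: "P ** f = f" by (rule proj_below_sym[OF less.prems(2) fp(1) f(2)])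
    have "f ** z = f ** (P ** z)" using f(2) by (simp add: matrix_mul_assoc)
    then have fz: "f ** z = f" using less.prems(3) f(2) by simp
    define P' where "P' = P - f"
    have P'S: "P' \<in> S" unfolding P'_def by (rule unital_star_subalg_diff[OF S less.prems(1) fS])
    have P'p: "is_proj P'"
      using PP ff Pf f(2) by (simp add: P'_def is_proj_def matrix_diff_ldistrib matrix_diff_rdistrib)
    have P'z: "P' ** z = P'" using less.prems(3) fz by (simp add: P'_def matrix_diff_rdistrib)
    have "range_dim P' < range_dim P"
      using P'p less.prems(2) PP f(2) fp(2)
      by (intro proj_range_dim_less) (auto simp: P'_def matrix_diff_rdistrib)
    then obtain n where n: "\<forall>\<phi>. tracial_on S \<phi> \<longrightarrow> \<phi> P' = of_nat n * \<phi> g"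
      using less.hyps[OF _ P'S P'p P'z] by blast
    have "\<phi> P = of_nat (Suc n) * \<phi> g" if \<phi>: "tracial_on S \<phi>" for \<phi>
    proof -
      have "\<phi> P' = of_nat n * \<phi> g" using n \<phi> by blast
      moreover have "\<phi> P = \<phi> P' + \<phi> f" using tracial_on_add[OF \<phi> P'S fS] by (simp add: P'_def)
      moreover have "\<phi> f = \<phi> g" by (rule min_proj_trace_eq[OF S \<phi> z f(1) fz g])
      ultimately show ?thesis by (simp add: distrib_right)
    qed
    then show ?thesis by (intro exI[of _ "Suc n"] allI impI)
  qed
qed

lemma tracial_on_mtrace: "tracial_on S mtrace"
  unfolding tracial_on_def using mtrace_add mtrace_commute mtrace_cscale by blast

lemma tracial_on_subset: "tracial_on S \<phi> \<Longrightarrow> A \<subseteq> S \<Longrightarrow> tracial_on A \<phi>"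
  by (simp add: tracial_on_def subset_iff)

lemma faithful_tracial_state_tracial_on: "faithful_tracial_state tr S \<Longrightarrow> tracial_on S tr"
  by (simp add: faithful_tracial_state_def tracial_on_def)

lemma faithful_tracial_state_positive:
  "faithful_tracial_state tr S \<Longrightarrow> x \<in> S \<Longrightarrow> Im (tr (adj x ** x)) = 0 \<and> 0 \<le> Re (tr (adj x ** x))"
  by (simp add: faithful_tracial_state_def)

lemma faithful_tracial_state_faithful:
  "faithful_tracial_state tr S \<Longrightarrow> x \<in> S \<Longrightarrow> tr (adj x ** x) = 0 \<Longrightarrow> x = 0"
  by (simp add: faithful_tracial_state_def)

lemma tr_proj_mult:
  assumes tr: "faithful_tracial_state tr S" and S: "unital_star_subalg S"
    and P: "P \<in> S" "is_proj P" and Q: "Q \<in> S" "is_proj Q"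
  shows "Im (tr (P ** Q)) = 0" "0 \<le> Re (tr (P ** Q))"
proof -
  have "tr (P ** Q) = tr (P ** (P ** Q ** Q))"
    using P(2) Q(2) by (simp add: is_proj_def matrix_mul_assoc proj_mult_idem)
  also have "\<dots> = tr (P ** Q ** Q ** P)"
    using tracial_on_commute[OF faithful_tracial_state_tracial_on[OF tr] P(1)
        unital_star_subalg_mult[OF S unital_star_subalg_mult[OF S P(1) Q(1)] Q(1)]]
    by (simp add: matrix_mul_assoc)
  also have "\<dots> = tr (adj (Q ** P) ** (Q ** P))"
    using P(2) Q(2) by (simp add: is_proj_def adj_matrix_mult matrix_mul_assoc)
  finally show "Im (tr (P ** Q)) = 0" "0 \<le> Re (tr (P ** Q))"
    using faithful_tracial_state_positive[OF tr unital_star_subalg_mult[OF S Q(1) P(1)]] by simp_all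
qed

lemma tr_proj_pos:
  assumes tr: "faithful_tracial_state tr S" and P: "P \<in> S" "is_proj P" "P \<noteq> 0"
  shows "0 < Re (tr P)" "Im (tr P) = 0"
proof -
  have P': "adj P ** P = P" using P(2) by (simp add: is_proj_def)
  then have "tr P \<noteq> 0" using faithful_tracial_state_faithful[OF tr P(1)] P(3) by metis
  moreover have "Im (tr P) = 0" "0 \<le> Re (tr P)"
    using faithful_tracial_state_positive[OF tr P(1)] P' by simp_all
  ultimately show "0 < Re (tr P)" "Im (tr P) = 0" by (auto simp: complex_eq_iff)
qed

lemma mtrace_proj_pos: "is_proj P \<Longrightarrow> P \<noteq> 0 \<Longrightarrow> 0 < Re (mtrace P)"
  using mtrace_adj_mult_self_pos[of P] by (simp add: is_proj_def)

lemma trace_ratio_eq_mtrace_ratio: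
  assumes A: "unital_star_subalg A" "A \<subseteq> S" and tr: "faithful_tracial_state tr S"
    and w: "w \<in> summands A" and P: "P \<in> A" "is_proj P" "P ** w = P"
  shows "Re (mtrace P) / Re (mtrace (minproj_in A w)) * Re (tr (minproj_in A w)) = Re (tr P)"
proof -
  define g where "g = minproj_in A w"
  have g: "g \<in> min_projs A" "g ** w = g" using minproj_in[OF w] by (auto simp: g_def)
  obtain n :: nat where n: "\<forall>\<phi>. tracial_on A \<phi> \<longrightarrow> \<phi> P = of_nat n * \<phi> g"
    using proj_trace_multiple[OF A(1) w g P] by blast
  have "tr P = of_nat n * tr g" "mtrace P = of_nat n * mtrace g"
    using n tracial_on_subset[OF faithful_tracial_state_tracial_on[OF tr] A(2)] tracial_on_mtrace
    by blast+
  moreover have "0 < Re (mtrace g)" using min_projsD(2,3)[OF g(1)] by (rule mtrace_proj_pos)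
  ultimately show ?thesis by (simp add: g_def[symmetric])
qed

lemma incl_mat_mult_trace_vec:
  assumes A: "unital_star_subalg A" and B: "unital_star_subalg B" and AB: "A \<subseteq> B" "B \<subseteq> S"
    and tr: "faithful_tracial_state tr S" and z: "z \<in> summands A" and w: "w \<in> summands B"
  shows "incl_mat A B z w * trace_vec tr B w = Re (tr (minproj_in A z ** w))"
proof -
  define e where "e = minproj_in A z"
  have eB: "e \<in> B" using min_projsD(1)[OF minproj_in(1)[OF z]] AB(1) by (auto simp: e_def)
  have ep: "is_proj e" using min_projsD(2)[OF minproj_in(1)[OF z]] by (simp add: e_def)
  have wB: "w \<in> B" and wp: "is_proj w" using summandsD(1,2)[OF w] by auto
  have "is_proj (e ** w)" using ep wp summandsD(4)[OF w eB] by (intro is_proj_mult) simp_all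
  moreover have "e ** w ** w = e ** w" using wp by (simp add: is_proj_def flip: matrix_mul_assoc)
  ultimately have "Re (mtrace (e ** w)) / Re (mtrace (minproj_in B w)) * Re (tr (minproj_in B w))
      = Re (tr (e ** w))"
    by (intro trace_ratio_eq_mtrace_ratio[OF B AB(2) tr w unital_star_subalg_mult[OF B eB wB]])
  then show ?thesis by (simp add: incl_mat_def trace_vec_def e_def)
qed

section \<open>Conditional expectations and commuting squares\<close>

lemma tr_cond_expD:
  assumes "tr_cond_exp tr S B E"
  shows "x \<in> S \<Longrightarrow> E x \<in> B" "b \<in> B \<Longrightarrow> E b = b"
    "b1 \<in> B \<Longrightarrow> b2 \<in> B \<Longrightarrow> x \<in> S \<Longrightarrow> E (b1 ** x ** b2) = b1 ** E x ** b2"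
    "x \<in> S \<Longrightarrow> tr (E x) = tr x"
  using assms unfolding tr_cond_exp_def by blast+

lemma tr_cond_exp_mult_right:
  "tr_cond_exp tr S B E \<Longrightarrow> unital_star_subalg B \<Longrightarrow> x \<in> S \<Longrightarrow> b \<in> B \<Longrightarrow> E (x ** b) = E x ** b"
  using tr_cond_expD(3)[of tr S B E "mat 1" b x] unital_star_subalg_one by fastforce

lemma tr_cond_exp_mult_left:
  "tr_cond_exp tr S B E \<Longrightarrow> unital_star_subalg B \<Longrightarrow> x \<in> S \<Longrightarrow> b \<in> B \<Longrightarrow> E (b ** x) = b ** E x"
  using tr_cond_expD(3)[of tr S B E b "mat 1" x] unital_star_subalg_one by fastforce

lemma tr_cond_exp_trace_mult:
  assumes E: "tr_cond_exp tr S B E" and B: "unital_star_subalg B" and S: "unital_star_subalg S"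
    and BS: "B \<subseteq> S" and x: "x \<in> S" and b: "b \<in> B"
  shows "tr (x ** b) = tr (E x ** b)"
proof -
  have "x ** b \<in> S" using unital_star_subalg_mult[OF S x] BS b by blast
  then have "tr (x ** b) = tr (E (x ** b))" using tr_cond_expD(4)[OF E] by simp
  then show ?thesis using tr_cond_exp_mult_right[OF E B x b] by simp
qed

lemma tr_cond_exp_central:
  assumes E: "tr_cond_exp tr S B E" and B: "unital_star_subalg B" and BS: "B \<subseteq> S"
    and x: "x \<in> S" "\<And>b. b \<in> B \<Longrightarrow> x ** b = b ** x"
  shows "\<forall>b\<in>B. E x ** b = b ** E x"
proof
  fix b assume b: "b \<in> B"
  have "E x ** b = E (x ** b)" using tr_cond_exp_mult_right[OF E B x(1) b] by simp
  also have "\<dots> = E (b ** x)" using x(2)[OF b] by simp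
  also have "\<dots> = b ** E x" by (rule tr_cond_exp_mult_left[OF E B x(1) b])
  finally show "E x ** b = b ** E x" .
qed

text \<open>The expectation of a central projection of S onto B is central in B, hence a scalar on
  each summand of B.\<close>

lemma summand_trace_product:
  assumes S: "unital_star_subalg S" and B: "unital_star_subalg B" and BS: "B \<subseteq> S"
    and tr: "faithful_tracial_state tr S" and E: "tr_cond_exp tr S B E"
    and w: "w \<in> summands B" and l: "l \<in> summands S" and e: "e \<in> B"
  shows "tr (minproj_in B w ** l) * tr (e ** w) = tr (minproj_in B w) * tr (e ** w ** l)"
proof -
  define f where "f = minproj_in B w"
  have fB: "f \<in> B" and fw: "f ** w = f" and fp: "is_proj f"
    using minproj_in[OF w] min_projsD(1,2) by (auto simp: f_def)
  have wB: "w \<in> B" and wp: "is_proj w" using summandsD(1,2)[OF w] by auto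
  have wf: "w ** f = f" by (rule proj_below_sym[OF wp fp fw])
  have lS: "l \<in> S" and lc: "\<And>s. s \<in> S \<Longrightarrow> l ** s = s ** l" using summandsD(1,4)[OF l] by auto
  have \<tau>: "tracial_on S tr" by (rule faithful_tracial_state_tracial_on[OF tr])
  have YB: "E l \<in> B" by (rule tr_cond_expD(1)[OF E lS])
  have Yc: "\<forall>b\<in>B. E l ** b = b ** E l"
    using lc BS by (intro tr_cond_exp_central[OF E B BS lS]) auto
  obtain c where Yw: "E l ** w = cscale c w"
    using central_scalar_on_summand[OF B YB Yc w] by blast
  have Yf: "E l ** f = cscale c f"
    using Yw wf by (metis cscale_matrix_mult_left matrix_mul_assoc)
  have ewB: "e ** w \<in> B" by (rule unital_star_subalg_mult[OF B e wB])
  have "tr (f ** l) = tr (l ** f)" using BS fB lS by (intro tracial_on_commute[OF \<tau>]) auto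
  also have "\<dots> = tr (E l ** f)" by (rule tr_cond_exp_trace_mult[OF E B S BS lS fB])
  also have "\<dots> = c * tr f" using Yf tracial_on_cscale[OF \<tau>] BS fB by auto
  finally have t1: "tr (f ** l) = c * tr f" .
  have "tr (e ** w ** l) = tr (l ** (e ** w))" using BS ewB lS by (intro tracial_on_commute[OF \<tau>]) auto
  also have "\<dots> = tr (E l ** (e ** w))" by (rule tr_cond_exp_trace_mult[OF E B S BS lS ewB])
  also have "E l ** (e ** w) = cscale c (e ** w)"
    using Yc e Yw by (metis cscale_matrix_mult_right matrix_mul_assoc)
  also have "tr (cscale c (e ** w)) = c * tr (e ** w)" using tracial_on_cscale[OF \<tau>] BS ewB by auto
  finally have t2: "tr (e ** w ** l) = c * tr (e ** w)" .
  show ?thesis unfolding f_def[symmetric] t1 t2 by simp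
qed

lemma summand_average:
  assumes S: "unital_star_subalg S" and B: "unital_star_subalg B" and BS: "B \<subseteq> S"
    and tr: "faithful_tracial_state tr S" and E: "tr_cond_exp tr S B E"
    and w: "w \<in> summands B" and e: "e \<in> B" "is_proj e"
  shows "(\<Sum>l\<in>summands S. incl_mat B S w l * b l * trace_vec tr S l / trace_vec tr B w) * Re (tr (e ** w))
    = (\<Sum>l\<in>summands S. b l * Re (tr (e ** w ** l)))"
proof -
  define f where "f = minproj_in B w"
  have fB: "f \<in> B" and fp: "is_proj f" "f \<noteq> 0"
    using min_projsD(1-3)[OF minproj_in(1)[OF w]] by (auto simp: f_def)
  have fS: "f \<in> S" using fB BS by blast
  have wB: "w \<in> B" and wp: "is_proj w" using summandsD(1,2)[OF w] by auto
  have ewB: "e ** w \<in> B" by (rule unital_star_subalg_mult[OF B e(1) wB])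
  have ewp: "is_proj (e ** w)" using e(2) wp summandsD(4)[OF w e(1)] by (intro is_proj_mult) simp_all
  have f0: "0 < Re (tr f)" "Im (tr f) = 0" using tr_proj_pos[OF tr fS fp] by auto
  have "incl_mat B S w l * b l * trace_vec tr S l / trace_vec tr B w * Re (tr (e ** w))
      = b l * Re (tr (e ** w ** l))" if l: "l \<in> summands S" for l
  proof -
    have lS: "l \<in> S" and lp: "is_proj l" using summandsD(1,2)[OF l] by auto
    have "incl_mat B S w l * trace_vec tr S l = Re (tr (f ** l))"
      unfolding f_def by (rule incl_mat_mult_trace_vec[OF B S BS subset_refl tr w l])
    moreover have "Re (tr (f ** l)) * Re (tr (e ** w)) = Re (tr f) * Re (tr (e ** w ** l))"
    proof -
      have "tr (f ** l) * tr (e ** w) = tr f * tr (e ** w ** l)"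
        unfolding f_def by (rule summand_trace_product[OF S B BS tr E w l e(1)])
      then have "Re (tr (f ** l) * tr (e ** w)) = Re (tr f * tr (e ** w ** l))" by (rule arg_cong)
      moreover have "Im (tr (f ** l)) = 0" by (rule tr_proj_mult(1)[OF tr S fS fp(1) lS lp])
      moreover have "Im (tr (e ** w)) = 0" using BS e wB wp by (intro tr_proj_mult(1)[OF tr S]) auto
      moreover have "Im (tr (e ** w ** l)) = 0"
        using BS ewB ewp by (intro tr_proj_mult(1)[OF tr S _ _ lS lp]) auto
      ultimately show ?thesis using f0(2) by simp
    qed
    ultimately show ?thesis using f0(1) by (simp add: trace_vec_def f_def[symmetric] field_simps)
  qed
  then show ?thesis by (simp add: sum_distrib_right)
qed

lemma summand_term:
  assumes S: "unital_star_subalg S" and B: "unital_star_subalg B" and BS: "B \<subseteq> S"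
    and tr: "faithful_tracial_state tr S" and E: "tr_cond_exp tr S B E"
    and A: "unital_star_subalg A" "A \<subseteq> B" and i: "i \<in> summands A" and w: "w \<in> summands B"
  shows "(\<Sum>l\<in>summands S. incl_mat B S w l * b l * trace_vec tr S l / trace_vec tr B w) powr q
      * incl_mat A B i w * trace_vec tr B w / trace_vec tr A i
    = ((\<Sum>l\<in>summands S. b l * Re (tr (minproj_in A i ** w ** l))) / Re (tr (minproj_in A i ** w))) powr q
      * Re (tr (minproj_in A i ** w)) / trace_vec tr A i"
proof -
  define e where "e = minproj_in A i"
  have e: "e \<in> B" "is_proj e" using min_projsD(1,2)[OF minproj_in(1)[OF i]] A(2) by (auto simp: e_def)
  define y where "y = (\<Sum>l\<in>summands S. incl_mat B S w l * b l * trace_vec tr S l / trace_vec tr B w)"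
  define R where "R = Re (tr (e ** w))"
  define X where "X = (\<Sum>l\<in>summands S. b l * Re (tr (e ** w ** l)))"
  have yR: "y * R = X"
    unfolding y_def R_def X_def by (rule summand_average[OF S B BS tr E w e])
  have "incl_mat A B i w * trace_vec tr B w = R"
    unfolding R_def e_def by (rule incl_mat_mult_trace_vec[OF A(1) B A(2) BS tr i w])
  then have "y powr q * incl_mat A B i w * trace_vec tr B w = y powr q * R"
    by (simp add: mult.assoc)
  also have "\<dots> = (X / R) powr q * R" using yR by (cases "R = 0") auto
  finally show ?thesis by (simp add: y_def X_def R_def e_def)
qed

lemma tracial_on_sum:
  assumes \<phi>: "tracial_on S \<phi>" and S: "unital_star_subalg S" and F: "\<And>i. i \<in> I \<Longrightarrow> F i \<in> S"
  shows "\<phi> (sum F I) = (\<Sum>i\<in>I. \<phi> (F i))"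
  using F
proof (induction I rule: infinite_finite_induct)
  case (insert x I)
  have "sum F I \<in> S" using insert.prems by (intro unital_star_subalg_sum[OF S]) auto
  then show ?case using insert tracial_on_add[OF \<phi>] by simp
qed (simp_all add: tracial_on_zero[OF S \<phi>])

lemma sum_summands_trace:
  assumes S: "unital_star_subalg S" and \<phi>: "tracial_on S \<phi>" and A: "unital_star_subalg A" "A \<subseteq> S"
    and X: "X \<in> S" and Y: "Y \<in> S"
  shows "(\<Sum>z\<in>summands A. \<phi> (X ** z ** Y)) = \<phi> (X ** Y)"
proof -
  have "X ** z ** Y \<in> S" if "z \<in> summands A" for z
    using unital_star_subalg_mult[OF S unital_star_subalg_mult[OF S X] Y] summandsD(1)[OF that] A(2) by blast
  then have "(\<Sum>z\<in>summands A. \<phi> (X ** z ** Y)) = \<phi> (\<Sum>z\<in>summands A. X ** z ** Y)"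
    by (rule tracial_on_sum[OF \<phi> S, symmetric])
  also have "(\<Sum>z\<in>summands A. X ** z ** Y) = X ** (\<Sum>z\<in>summands A. z) ** Y"
    by (simp add: matrix_sum_ldistrib matrix_sum_rdistrib)
  finally show ?thesis by (simp add: sum_summands[OF A(1)])
qed

locale commuting_square =
  fixes A00 A01 A10 A11 :: "'n::finite cmat set" and tr :: "'n cmat \<Rightarrow> complex"
    and E00 E01 E10 :: "'n cmat \<Rightarrow> 'n cmat"
  assumes alg: "unital_star_subalg A00" "unital_star_subalg A01"
    "unital_star_subalg A10" "unital_star_subalg A11"
    and incl: "A00 \<subseteq> A01" "A01 \<subseteq> A11" "A00 \<subseteq> A10" "A10 \<subseteq> A11"
    and tr: "faithful_tracial_state tr A11"
    and E: "tr_cond_exp tr A11 A00 E00" "tr_cond_exp tr A11 A01 E01" "tr_cond_exp tr A11 A10 E10"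
    and comm_sq: "\<forall>x\<in>A11. E01 (E10 x) = E00 x"
begin

lemma summands_subset_A11: "j \<in> summands A10 \<Longrightarrow> j \<in> A11" "k \<in> summands A01 \<Longrightarrow> k \<in> A11"
  using summandsD(1) incl(2,4) by blast+

definition weight :: "'n cmat \<Rightarrow> 'n cmat \<Rightarrow> 'n cmat \<Rightarrow> 'n cmat \<Rightarrow> real" where
  "weight i j k l = Re (tr (minproj_in A00 i ** j ** k ** l))"

lemma independence:
  assumes i: "i \<in> summands A00" and e: "e \<in> A00" "e ** i = e"
    and j: "j \<in> summands A10" and k: "k \<in> summands A01"
  shows "tr (e ** j ** k) * tr e = tr (e ** j) * tr (e ** k)"
proof -
  have \<tau>: "tracial_on A11 tr" by (rule faithful_tracial_state_tracial_on[OF tr])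
  have e01: "e \<in> A01" and e11: "e \<in> A11" using e(1) incl by auto
  have j10: "j \<in> A10" and j11: "j \<in> A11" using summandsD(1)[OF j] incl by auto
  have k01: "k \<in> A01" and k11: "k \<in> A11" using summandsD(1)[OF k] incl by auto
  have ke: "k ** e = e ** k" using summandsD(4)[OF k e01] by simp
  define Z where "Z = E00 j"
  have "\<forall>b\<in>A00. Z ** b = b ** Z"
    unfolding Z_def using incl summandsD(4)[OF j] by (intro tr_cond_exp_central[OF E(1) alg(1) _ j11]) auto
  then have Z: "Z \<in> A00" "\<forall>b\<in>A00. Z ** b = b ** Z"
    using tr_cond_expD(1)[OF E(1) j11] by (simp_all add: Z_def)
  obtain \<alpha> where "Z ** i = cscale \<alpha> i" using central_scalar_on_summand[OF alg(1) Z i] by blast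
  then have Ze: "Z ** e = cscale \<alpha> e"
    using e Z(2) summandsD(1)[OF i] by (metis cscale_matrix_mult_right matrix_mul_assoc)
  have "E01 (E10 j) = E00 j" using comm_sq j11 by blast
  then have "E01 j = Z" using tr_cond_expD(2)[OF E(3) j10] by (simp add: Z_def)
  have "tr (e ** j ** k) = tr (j ** (k ** e))"
    using tracial_on_commute[OF \<tau> e11 unital_star_subalg_mult[OF alg(4) j11 k11]] by (simp add: matrix_mul_assoc)
  also have "\<dots> = tr (Z ** (k ** e))"
    using incl \<open>E01 j = Z\<close> unital_star_subalg_mult[OF alg(2) k01 e01]
    by (simp add: tr_cond_exp_trace_mult[OF E(2) alg(2) alg(4) incl(2) j11])
  also have "\<dots> = \<alpha> * tr (e ** k)"
    using Ze ke tracial_on_cscale[OF \<tau> unital_star_subalg_mult[OF alg(4) e11 k11]] by (simp add: matrix_mul_assoc)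
  finally have jk: "tr (e ** j ** k) = \<alpha> * tr (e ** k)" .
  have "tr (e ** j) = tr (j ** e)" by (rule tracial_on_commute[OF \<tau> e11 j11])
  also have "\<dots> = tr (Z ** e)"
    unfolding Z_def using incl by (intro tr_cond_exp_trace_mult[OF E(1) alg(1) alg(4) _ j11 e(1)]) auto
  also have "\<dots> = \<alpha> * tr e" using Ze tracial_on_cscale[OF \<tau> e11] by simp
  finally show ?thesis using jk by simp
qed


lemma weight_nonneg:
  assumes i: "i \<in> summands A00" and j: "j \<in> summands A10" and k: "k \<in> summands A01"
    and l: "l \<in> summands A11"
  shows "0 \<le> weight i j k l"
proof -
  define e where "e = minproj_in A00 i"
  have e: "e \<in> A10" "e \<in> A01" "e \<in> A11" "is_proj e"
    using minproj_in_proj(1,2)[OF i] incl by (auto simp: e_def)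
  have j': "j \<in> A11" "is_proj j" and k': "k \<in> A11" "is_proj k" and l': "l \<in> A11" "is_proj l"
    using summandsD(1,2)[OF j] summandsD(1,2)[OF k] summandsD(1,2)[OF l] incl by auto
  have ej: "e ** j = j ** e" and ek: "e ** k = k ** e"
    using summandsD(4)[OF j e(1)] summandsD(4)[OF k e(2)] by simp_all
  have lc: "\<And>x. x \<in> A11 \<Longrightarrow> l ** x = x ** l" using summandsD(4)[OF l] .
  have ejS: "e ** j \<in> A11" and ekS: "e ** k \<in> A11" using unital_star_subalg_mult[OF alg(4)] e(3) j' k' by auto
  have P: "e ** j ** l \<in> A11" "is_proj (e ** j ** l)"
    using unital_star_subalg_mult[OF alg(4) ejS l'(1)] is_proj_mult[OF is_proj_mult[OF e(4) j'(2) ej] l'(2)]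
      lc[OF ejS] by simp_all
  have Q: "e ** k ** l \<in> A11" "is_proj (e ** k ** l)"
    using unital_star_subalg_mult[OF alg(4) ekS l'(1)] is_proj_mult[OF is_proj_mult[OF e(4) k'(2) ek] l'(2)]
      lc[OF ekS] by simp_all
  have "e ** j ** l ** (e ** k ** l) = e ** j ** (l ** (e ** k)) ** l"
    by (simp add: matrix_mul_assoc)
  also have "\<dots> = e ** j ** e ** k ** l"
    using lc[OF ekS] l'(2) by (simp add: matrix_mul_assoc proj_mult_idem)
  also have "e ** j ** e = e ** j"
    using ej e(4) by (metis is_proj_def matrix_mul_assoc)
  finally show ?thesis
    using tr_proj_mult(2)[OF tr alg(4) P Q] by (simp add: weight_def e_def)
qed


lemma weight_sum_A01:
  assumes i: "i \<in> summands A00" and j: "j \<in> A11" and l: "l \<in> A11"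
  shows "(\<Sum>k\<in>summands A01. weight i j k l) = Re (tr (minproj_in A00 i ** j ** l))"
proof -
  have "minproj_in A00 i ** j \<in> A11"
    using unital_star_subalg_mult[OF alg(4) _ j] minproj_in_proj(1)[OF i] incl by auto
  from sum_summands_trace[OF alg(4) faithful_tracial_state_tracial_on[OF tr] alg(2) incl(2) this l]
  show ?thesis by (simp add: weight_def flip: Re_sum)
qed

lemma weight_sum_A10:
  assumes i: "i \<in> summands A00" and k: "k \<in> A11" and l: "l \<in> A11"
  shows "(\<Sum>j\<in>summands A10. weight i j k l) = Re (tr (minproj_in A00 i ** k ** l))"
proof -
  have "minproj_in A00 i \<in> A11" using minproj_in_proj(1)[OF i] incl by auto
  from sum_summands_trace[OF alg(4) faithful_tracial_state_tracial_on[OF tr] alg(3) incl(4) this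
      unital_star_subalg_mult[OF alg(4) k l]]
  show ?thesis by (simp add: weight_def matrix_mul_assoc flip: Re_sum)
qed

lemma weight_sum_A11:
  assumes i: "i \<in> summands A00" and j: "j \<in> A11" and k: "k \<in> A11"
  shows "(\<Sum>l\<in>summands A11. weight i j k l) = Re (tr (minproj_in A00 i ** j ** k))"
proof -
  have "minproj_in A00 i ** j ** k \<in> A11"
    using unital_star_subalg_mult[OF alg(4) unital_star_subalg_mult[OF alg(4) _ j] k] minproj_in_proj(1)[OF i] incl by auto
  from sum_summands_trace[OF alg(4) faithful_tracial_state_tracial_on[OF tr] alg(4) subset_refl
      this unital_star_subalg_one[OF alg(4)]]
  show ?thesis by (simp add: weight_def flip: Re_sum)
qed

lemma weight_sum_A01_A11:
  assumes i: "i \<in> summands A00" and j: "j \<in> A11"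
  shows "(\<Sum>k\<in>summands A01. \<Sum>l\<in>summands A11. weight i j k l) = Re (tr (minproj_in A00 i ** j))"
proof -
  have "minproj_in A00 i ** j \<in> A11"
    using unital_star_subalg_mult[OF alg(4) _ j] minproj_in_proj(1)[OF i] incl by auto
  from sum_summands_trace[OF alg(4) faithful_tracial_state_tracial_on[OF tr] alg(2) incl(2) this
      unital_star_subalg_one[OF alg(4)]]
  moreover have "(\<Sum>k\<in>summands A01. \<Sum>l\<in>summands A11. weight i j k l)
      = (\<Sum>k\<in>summands A01. Re (tr (minproj_in A00 i ** j ** k)))"
    using summandsD(1) incl(2) by (intro sum.cong refl weight_sum_A11[OF i j]) blast
  ultimately show ?thesis by (simp flip: Re_sum)
qed

lemma weight_sum_A10_A11:
  assumes i: "i \<in> summands A00" and k: "k \<in> A11"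
  shows "(\<Sum>j\<in>summands A10. \<Sum>l\<in>summands A11. weight i j k l) = Re (tr (minproj_in A00 i ** k))"
proof -
  have "minproj_in A00 i \<in> A11" using minproj_in_proj(1)[OF i] incl by auto
  from sum_summands_trace[OF alg(4) faithful_tracial_state_tracial_on[OF tr] alg(3) incl(4) this k]
  moreover have "(\<Sum>j\<in>summands A10. \<Sum>l\<in>summands A11. weight i j k l)
      = (\<Sum>j\<in>summands A10. Re (tr (minproj_in A00 i ** j ** k)))"
    using summandsD(1) incl(4) by (intro sum.cong refl weight_sum_A11[OF i _ k]) blast
  ultimately show ?thesis by (simp flip: Re_sum)
qed

lemma weight_independent:
  assumes i: "i \<in> summands A00" and j: "j \<in> summands A10" and k: "k \<in> summands A01"
  shows "(\<Sum>l\<in>summands A11. weight i j k l) * trace_vec tr A00 i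
    = (\<Sum>k'\<in>summands A01. \<Sum>l\<in>summands A11. weight i j k' l)
      * (\<Sum>j'\<in>summands A10. \<Sum>l\<in>summands A11. weight i j' k l)"
proof -
  define e where "e = minproj_in A00 i"
  have e: "e \<in> A00" "e \<in> A10" "e \<in> A01" "e \<in> A11" "is_proj e" "e ** i = e"
    using minproj_in_proj(1,2)[OF i] minproj_in(2)[OF i] incl by (auto simp: e_def)
  have j': "j \<in> A11" "is_proj j" and k': "k \<in> A11" "is_proj k"
    using summandsD(1,2)[OF j] summandsD(1,2)[OF k] incl by auto
  have ej: "e ** j \<in> A11" "is_proj (e ** j)" and ek: "e ** k \<in> A11" "is_proj (e ** k)"
    using unital_star_subalg_mult[OF alg(4)] e(4) j'(1) k'(1) summandsD(4)[OF j e(2)] summandsD(4)[OF k e(3)]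
      is_proj_mult[OF e(5) j'(2)] is_proj_mult[OF e(5) k'(2)] by auto
  have "e ** j ** (e ** k) = e ** j ** k"
    using summandsD(4)[OF j e(2)] e(5) by (metis is_proj_def matrix_mul_assoc)
  then have "Im (tr (e ** j ** k)) = 0" using tr_proj_mult(1)[OF tr alg(4) ej ek] by simp
  moreover have "Im (tr e) = 0" using tr_proj_mult(1)[OF tr alg(4) e(4,5) unital_star_subalg_one[OF alg(4)]]
    by (simp add: is_proj_def)
  moreover have "Im (tr (e ** j)) = 0" "Im (tr (e ** k)) = 0"
    using tr_proj_mult(1)[OF tr alg(4) ej unital_star_subalg_one[OF alg(4)]]
      tr_proj_mult(1)[OF tr alg(4) ek unital_star_subalg_one[OF alg(4)]] by (simp_all add: is_proj_def)
  moreover have "Re (tr (e ** j ** k) * tr e) = Re (tr (e ** j) * tr (e ** k))"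
    using independence[OF i e(1,6) j k] by simp
  ultimately show ?thesis
    by (simp add: weight_sum_A11[OF i j'(1) k'(1)] weight_sum_A01_A11[OF i j'(1)]
        weight_sum_A10_A11[OF i k'(1)] trace_vec_def e_def)
qed

lemma summand_term_A10:
  assumes i: "i \<in> summands A00" and j: "j \<in> summands A10"
  shows "(\<Sum>l\<in>summands A11. incl_mat A10 A11 j l * b l * trace_vec tr A11 l / trace_vec tr A10 j) powr q
      * incl_mat A00 A10 i j * trace_vec tr A10 j / trace_vec tr A00 i
    = ((\<Sum>l\<in>summands A11. b l * (\<Sum>k\<in>summands A01. weight i j k l))
        / (\<Sum>k\<in>summands A01. \<Sum>l\<in>summands A11. weight i j k l)) powr q
      * (\<Sum>k\<in>summands A01. \<Sum>l\<in>summands A11. weight i j k l) / trace_vec tr A00 i"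
  using summand_term[OF alg(4,3) incl(4) tr E(3) alg(1) incl(3) i j] summands_subset_A11(1)[OF j]
  by (simp add: weight_sum_A01[OF i] weight_sum_A01_A11[OF i] summandsD(1) subsetD[OF incl(4)])

lemma summand_term_A01:
  assumes i: "i \<in> summands A00" and k: "k \<in> summands A01"
  shows "(\<Sum>l\<in>summands A11. incl_mat A01 A11 k l * b l * trace_vec tr A11 l / trace_vec tr A01 k) powr q
      * incl_mat A00 A01 i k * trace_vec tr A01 k / trace_vec tr A00 i
    = ((\<Sum>l\<in>summands A11. b l * (\<Sum>j\<in>summands A10. weight i j k l))
        / (\<Sum>j\<in>summands A10. \<Sum>l\<in>summands A11. weight i j k l)) powr q
      * (\<Sum>j\<in>summands A10. \<Sum>l\<in>summands A11. weight i j k l) / trace_vec tr A00 i"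
  using summand_term[OF alg(4,2) incl(2) tr E(2) alg(1) incl(1) i k] summands_subset_A11(2)[OF k]
  by (simp add: weight_sum_A10[OF i] weight_sum_A10_A11[OF i] summandsD(1) subsetD[OF incl(2)])

lemma sum_summand_terms_A10:
  assumes i: "i \<in> summands A00"
  shows "(\<Sum>j\<in>summands A10.
      (\<Sum>l\<in>summands A11. incl_mat A10 A11 j l * b l * trace_vec tr A11 l / trace_vec tr A10 j) powr q
      * incl_mat A00 A10 i j * trace_vec tr A10 j / trace_vec tr A00 i)
    = (\<Sum>j\<in>summands A10. ((\<Sum>l\<in>summands A11. b l * (\<Sum>k\<in>summands A01. weight i j k l))
        / (\<Sum>k\<in>summands A01. \<Sum>l\<in>summands A11. weight i j k l)) powr q
      * (\<Sum>k\<in>summands A01. \<Sum>l\<in>summands A11. weight i j k l) / trace_vec tr A00 i)"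
  by (rule sum.cong[OF refl], rule summand_term_A10[OF i])

lemma sum_summand_terms_A01:
  assumes i: "i \<in> summands A00"
  shows "(\<Sum>k\<in>summands A01.
      (\<Sum>l\<in>summands A11. incl_mat A01 A11 k l * b l * trace_vec tr A11 l / trace_vec tr A01 k) powr q
      * incl_mat A00 A01 i k * trace_vec tr A01 k / trace_vec tr A00 i)
    = (\<Sum>k\<in>summands A01. ((\<Sum>l\<in>summands A11. b l * (\<Sum>j\<in>summands A10. weight i j k l))
        / (\<Sum>j\<in>summands A10. \<Sum>l\<in>summands A11. weight i j k l)) powr q
      * (\<Sum>j\<in>summands A10. \<Sum>l\<in>summands A11. weight i j k l) / trace_vec tr A00 i)"
  by (rule sum.cong[OF refl], rule summand_term_A01[OF i])

end

theorem theoremB: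
  fixes A00 A01 A10 A11 :: "'n::finite cmat set"
    and tr :: "'n cmat \<Rightarrow> complex"
    and E00 E01 E10 :: "'n cmat \<Rightarrow> 'n cmat"
    and p :: real
    and a :: "'n cmat \<Rightarrow> real"
    and i :: "'n cmat"
  assumes alg: "unital_star_subalg A00" "unital_star_subalg A01"
               "unital_star_subalg A10" "unital_star_subalg A11"
    and incl: "A00 \<subseteq> A01" "A01 \<subseteq> A11" "A00 \<subseteq> A10" "A10 \<subseteq> A11"
    and tr: "faithful_tracial_state tr A11"
    and E: "tr_cond_exp tr A11 A00 E00" "tr_cond_exp tr A11 A01 E01" "tr_cond_exp tr A11 A10 E10"
    and comm_sq: "\<forall>x\<in>A11. E01 (E10 x) = E00 x"
    and p: "1 \<le> p"
    and a: "\<forall>l\<in>summands A11. 0 \<le> a l"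
    and i: "i \<in> summands A00"
  shows "(\<Sum>j\<in>summands A10.
            (\<Sum>l\<in>summands A11. incl_mat A10 A11 j l * a l * trace_vec tr A11 l
                                   / trace_vec tr A10 j) powr p
            * incl_mat A00 A10 i j * trace_vec tr A10 j / trace_vec tr A00 i) powr (1 / p)
         \<le> (\<Sum>k\<in>summands A01.
            (\<Sum>l\<in>summands A11. incl_mat A01 A11 k l * a l powr p * trace_vec tr A11 l
                                   / trace_vec tr A01 k) powr (1 / p)
            * incl_mat A00 A01 i k * trace_vec tr A01 k / trace_vec tr A00 i)"
proof -
  interpret commuting_square A00 A01 A10 A11 tr E00 E01 E10
    by unfold_locales (rule alg incl tr E comm_sq)+
  have "0 < trace_vec tr A00 i"
    using tr_proj_pos(1)[OF tr] minproj_in_proj[OF i] incl by (auto simp: trace_vec_def)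
  show ?thesis
    unfolding sum_summand_terms_A10[OF i] sum_summand_terms_A01[OF i]
    using a by (intro conditional_mean_Lp_le[OF summands_finite[OF alg(3)] summands_finite[OF alg(2)]
        summands_finite[OF alg(4)] p \<open>0 < trace_vec tr A00 i\<close> weight_nonneg[OF i] _
        weight_independent[OF i]]) auto
qed

end
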